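(* Let $k$ be a field and $Q,q\in k^\times$. Let $\mathcal P_{Q,q}=\bigoplus_{d\ge0}\mathcal P^d_{Q,q}$ and $\mathcal{AP}_q=\bigoplus_{d\ge0}\mathcal{AP}^d_q$ with the monoidal structure described below. Then $\mathcal{AP}_q$ acts on $\mathcal P_{Q,q}$ from the right via the functor $*$ described below (with the structure morphisms $\lambda$ and $\rho$ being identities on objects), i.e. $(\mathcal P_{Q,q},\mathcal{AP}_q,* )$ is an action pair.
   Context: Hecke algebras: $\mathcal H^B_{Q,q}(d)$ is generated by $T_0,\dots,T_{d-1}$ with relations $(T_0+Q)(T_0-Q^{-1})=0$; $(T_i+q)(T_i-q^{-1})=0$ ($i>0$); $T_iT_{i+1}T_i=T_{i+1}T_iT_{i+1}$ ($i>0$); $T_0T_1T_0T_1=T_1T_0T_1T_0$; $T_iT_j=T_jT_i$ ($|i-j|>1$). Its subalgebra generated by $T_1,\dots,T_{d-1}$ is the type A Hecke algebra $\mathcal H^A_q(d)$. For $n=2s$ let $\mathbb I_n=\{-\tfrac{2s-1}{2},\dots,\tfrac{2s-1}{2}\}$ (half-integers) and for $n=2s+1$ let $\mathbb I_n=\{-s,\dots,s\}$; $V_n$ has basis $\{v_i:i\in\mathbb I_n\}$. $R_q(v_i\otimes v_j)=q^{-1}v_i\otimes v_j$ if $i=j$, $v_j\otimes v_i$ if $i<j$, $v_j\otimes v_i+(q^{-1}-q)v_i\otimes v_j$ if $i>j$; $K_Q(v_i)=Q^{-1}v_i$ if $i=0$, $v_{-i}$ if $i>0$, $v_{-i}+(Q^{-1}-Q)v_i$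 if $i<0$. $\mathcal H^B_{Q,q}(d)$ acts on $V_n^{\otimes d}$ from the right: $T_i$ ($i>0$) by $R_q$ on factors $i,i+1$, $T_0$ by $K_Q$ on the first factor. Categories: $\mathcal C^B_d$ (resp. $\mathcal C^A_d$) has objects $V_n$, $n\ge1$, and morphisms $\mathrm{Hom}_{\mathcal H^B_{Q,q}(d)}(V_n^{\otimes d},V_m^{\otimes d})$ (resp. $\mathrm{Hom}_{\mathcal H^A_q(d)}(V_n^{\otimes d},V_m^{\otimes d})$); $\mathcal P^d_{Q,q}$ (resp. $\mathcal{AP}^d_q$) is the category of $k$-linear functors from $\mathcal C^B_d$ (resp. $\mathcal C^A_d$) to finite-dimensional vector spaces. Monoidal structure on $\mathcal{AP}_q$: for $F\in\mathcal{AP}^d_q$, $G\in\mathcal{AP}^e_q$, $(F\otimes G)(V_n)=F(V_n)\otimes G(V_n)$, and on morphisms $F\otimes G$ is the composite $\mathrm{Hom}_{\mathcal H^A_q(d+e)}(V_n^{\otimes d+e},V_m^{\otimes d+e})\to\mathrm{Hom}_{\mathcal H^A_q(d)\otimes\mathcal H^A_q(e)}(V_n^{\otimes d}\otimes V_n^{\otimes e},V_m^{\otimes d}\otimes V_m^{\otimes e})\cong\mathrm{Hom}_{\mathcal H^A_q(d)}(V_n^{\otimes d},V_m^{\otimes d})\otimes\mathrm{Hom}_{\mathcal H^A_q(e)}(V_n^{\otimes e},V_m^{\otimes e})\to\mathrm{Hom}(F(V_n),F(V_m))\otimes\mathrm{Hom}(G(V_n),G(V_m))\to\mathrm{Hom}((F\otimes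 G)(V_n),(F\otimes G)(V_m))$; the unit is the degree-0 functor with value $k$. The action: for $G\in\mathcal P^e_{Q,q}$ and $F\in\mathcal{AP}^d_q$, $G*F\in\mathcal P^{e+d}_{Q,q}$ has $(G*F)(V_n)=G(V_n)\otimes F(V_n)$, and on morphisms the analogous composite through $\mathrm{Hom}_{\mathcal H^B_{Q,q}(e)\otimes\mathcal H^A_q(d)}$, using $\mathcal H^B_{Q,q}(e)\otimes\mathcal H^A_q(d)\subseteq\mathcal H^B_{Q,q}(e+d)$ (the second factor generated by $T_{e+1},\dots,T_{e+d-1}$); on natural transformations, $(f*g)_{V_n}=f_{V_n}\otimes g_{V_n}$. Action pair: for a category $\mathcal B$ and monoidal category $(\mathcal A,\otimes,1_{\mathcal A})$ with associator $a$ and left unitor $l$, a right action is a functor $*:\mathcal B\times\mathcal A\to\mathcal B$ with (1) $(f_1*g_1)(f_2*g_2)=(f_1f_2)*(g_1g_2)$ whenever defined; (2) a natural morphism $\lambda_{Y,X_1,X_2}:Y*(X_1\otimes X_2)\to(Y*X_1)*X_2$ with $(\lambda_{Y,X_1,X_2}*\mathrm{id}_{X_3})\circ\lambda_{Y,X_1\otimes X_2,X_3}=\lambda_{Y*X_1,X_2,X_3}\circ\lambda_{Y,X_1,X_2\otimes X_3}\circ(\mathrm{id}_Y*a_{X_1,X_2,X_3})$; (3) a natural isomorphism $\rho_Y:Y*1_{\mathcal A}\to Y$ with $(\rho_Y*\mathrm{id}_X)\circ\lambda_{Y,1,X}=\mathrm{id}_Y*l_X$. *)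

theory Defs
  imports Main "HOL.Rat"
begin

text \<open>A basis vector of V_n^{\<otimes>d} is a word (list) of length d over the index set I_n.
  Linear maps V_n^{\<otimes>d} \<rightarrow> V_m^{\<otimes>d} are matrices indexed by words
  (entry (u,w) = coefficient of v_u in the image of v_w), supported on the relevant words.\<close>

type_synonym 'k wmat = "rat list \<Rightarrow> rat list \<Rightarrow> 'k"
type_synonym 'k nmat = "nat \<Rightarrow> nat \<Rightarrow> 'k"

definition idx :: "nat \<Rightarrow> rat set" where
  "idx n = {of_int j - (of_nat n - 1) / 2 | j. 0 \<le> j \<and> j < int n}"

definition words :: "nat \<Rightarrow> nat \<Rightarrow> rat list set" where
  "words n d = {w. length w = d \<and> set w \<subseteq> idx n}"

definition wmul :: "rat list set \<Rightarrow> 'k::field wmat \<Rightarrow> 'k wmat \<Rightarrow> 'k wmat" where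
  "wmul S f g = (\<lambda>u w. \<Sum>v\<in>S. f u v * g v w)"

definition wmat_on :: "nat \<Rightarrow> nat \<Rightarrow> nat \<Rightarrow> 'k::field wmat \<Rightarrow> bool" where
  "wmat_on m n d f \<longleftrightarrow> (\<forall>u w. f u w \<noteq> 0 \<longrightarrow> u \<in> words m d \<and> w \<in> words n d)"

definition wid :: "nat \<Rightarrow> nat \<Rightarrow> 'k::field wmat" where
  "wid n d = (\<lambda>u w. if u = w \<and> w \<in> words n d then 1 else 0)"

text \<open>R_q acting on tensor factors i, i+1 (1-based), i.e. list positions i-1, i.\<close>
definition Rcoef :: "'k::field \<Rightarrow> nat \<Rightarrow> 'k wmat" where
  "Rcoef q i u w = (let a = w ! (i - 1); b = w ! i in
     (if a \<noteq> b \<and> u = w[i - 1 := b, i := a] then 1 else 0)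
     + (if u = w then (if a = b then inverse q else if b < a then inverse q - q else 0) else 0))"

definition Kcoef :: "'k::field \<Rightarrow> 'k wmat" where
  "Kcoef Q u w = (let a = w ! 0 in
     (if a \<noteq> 0 \<and> u = w[0 := - a] then 1 else 0)
     + (if u = w then (if a = 0 then inverse Q else if a < 0 then inverse Q - Q else 0) else 0))"

definition Tgen :: "'k::field \<Rightarrow> 'k \<Rightarrow> nat \<Rightarrow> nat \<Rightarrow> nat \<Rightarrow> 'k wmat" where
  "Tgen Q q n d j = (\<lambda>u w. if u \<in> words n d \<and> w \<in> words n d
       then (if j = 0 then Kcoef Q u w else Rcoef q j u w) else 0)"

text \<open>Linear maps commuting with the generators T_j, j \<in> J (= module homomorphisms
  for the subalgebra generated by these T_j).\<close>
definition HomJ :: "'k::field \<Rightarrow> 'k \<Rightarrow> nat \<Rightarrow> nat set \<Rightarrow> nat \<Rightarrow> nat \<Rightarrow> 'k wmat set" where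
  "HomJ Q q d J n m = {f. wmat_on m n d f \<and>
     (\<forall>j\<in>J. wmul (words n d) f (Tgen Q q n d j) = wmul (words m d) (Tgen Q q m d j) f)}"

text \<open>Hom_{H^B_{Q,q}(d)}(V_n^{\<otimes>d}, V_m^{\<otimes>d}) and Hom_{H^A_q(d)}(V_n^{\<otimes>d}, V_m^{\<otimes>d}).\<close>
definition HomB :: "'k::field \<Rightarrow> 'k \<Rightarrow> nat \<Rightarrow> nat \<Rightarrow> nat \<Rightarrow> 'k wmat set" where
  "HomB Q q d = HomJ Q q d {0..<d}"

definition HomA :: "'k::field \<Rightarrow> nat \<Rightarrow> nat \<Rightarrow> nat \<Rightarrow> 'k wmat set" where
  "HomA q d = HomJ 1 q d {1..<d}"  (* Q is irrelevant: T_0 is not used *)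

definition nmat_on :: "nat \<Rightarrow> nat \<Rightarrow> 'k::field nmat \<Rightarrow> bool" where
  "nmat_on r c A \<longleftrightarrow> (\<forall>i j. A i j \<noteq> 0 \<longrightarrow> i < r \<and> j < c)"

definition nmul :: "nat \<Rightarrow> 'k::field nmat \<Rightarrow> 'k nmat \<Rightarrow> 'k nmat" where
  "nmul N A B = (\<lambda>i j. \<Sum>l<N. A i l * B l j)"

definition nid :: "nat \<Rightarrow> 'k::field nmat" where
  "nid N = (\<lambda>i j. if i = j \<and> i < N then 1 else 0)"

text \<open>Kronecker product; rB, cB are the numbers of rows and columns of B.\<close>
definition nkron :: "nat \<Rightarrow> nat \<Rightarrow> 'k::field nmat \<Rightarrow> 'k nmat \<Rightarrow> 'k nmat" where
  "nkron rB cB A B = (\<lambda>r c. A (r div rB) (c div cB) * B (r mod rB) (c mod cB))"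

text \<open>Identification V^{\<otimes>d1} \<otimes> V^{\<otimes>d2} = V^{\<otimes>(d1+d2)} by concatenation of words.\<close>
definition wkron :: "nat \<Rightarrow> 'k::field wmat \<Rightarrow> 'k wmat \<Rightarrow> 'k wmat" where
  "wkron d1 a b = (\<lambda>u w. a (take d1 u) (take d1 w) * b (drop d1 u) (drop d1 w))"

record 'k fctr =
  fdim :: "nat \<Rightarrow> nat"
  fmor :: "nat \<Rightarrow> nat \<Rightarrow> 'k wmat \<Rightarrow> 'k nmat"

text \<open>k-linear functor from the category with objects V_n (n \<ge> 1) and hom spaces H n m
  (of degree d) to finite-dimensional vector spaces.\<close>
definition is_functor :: "nat \<Rightarrow> (nat \<Rightarrow> nat \<Rightarrow> 'k::field wmat set) \<Rightarrow> 'k fctr \<Rightarrow> bool" where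
  "is_functor d H F \<longleftrightarrow>
    (\<forall>n m f. 1 \<le> n \<longrightarrow> 1 \<le> m \<longrightarrow> f \<in> H n m \<longrightarrow>
       nmat_on (fdim F m) (fdim F n) (fmor F n m f)) \<and>
    (\<forall>n m f g c. 1 \<le> n \<longrightarrow> 1 \<le> m \<longrightarrow> f \<in> H n m \<longrightarrow> g \<in> H n m \<longrightarrow>
       fmor F n m (\<lambda>u w. f u w + g u w) = (\<lambda>i j. fmor F n m f i j + fmor F n m g i j) \<and>
       fmor F n m (\<lambda>u w. c * f u w) = (\<lambda>i j. c * fmor F n m f i j)) \<and>
    (\<forall>n. 1 \<le> n \<longrightarrow> fmor F n n (wid n d) = nid (fdim F n)) \<and>
    (\<forall>n m p f g. 1 \<le> n \<longrightarrow> 1 \<le> m \<longrightarrow> 1 \<le> p \<longrightarrow> f \<in> H n m \<longrightarrow> g \<in> H m p \<longrightarrow>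
       fmor F n p (wmul (words m d) g f) = nmul (fdim F m) (fmor F m p g) (fmor F n m f))"

definition Pobj :: "'k::field \<Rightarrow> 'k \<Rightarrow> nat \<Rightarrow> 'k fctr \<Rightarrow> bool" where
  "Pobj Q q d F \<longleftrightarrow> is_functor d (HomB Q q d) F"

definition APobj :: "'k::field \<Rightarrow> nat \<Rightarrow> 'k fctr \<Rightarrow> bool" where
  "APobj q d F \<longleftrightarrow> is_functor d (HomA q d) F"

definition nat_trans :: "(nat \<Rightarrow> nat \<Rightarrow> 'k::field wmat set) \<Rightarrow> 'k fctr \<Rightarrow> 'k fctr
    \<Rightarrow> (nat \<Rightarrow> 'k nmat) \<Rightarrow> bool" where
  "nat_trans H F G eta \<longleftrightarrow>
    (\<forall>n. 1 \<le> n \<longrightarrow> nmat_on (fdim G n) (fdim F n) (eta n)) \<and>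
    (\<forall>n m f. 1 \<le> n \<longrightarrow> 1 \<le> m \<longrightarrow> f \<in> H n m \<longrightarrow>
       nmul (fdim G n) (fmor G n m f) (eta n) = nmul (fdim F m) (eta m) (fmor F n m f))"

text \<open>Vertical composition eta \<circ> theta, where F is the middle functor; identities.\<close>
definition ntcomp :: "'k::field fctr \<Rightarrow> (nat \<Rightarrow> 'k nmat) \<Rightarrow> (nat \<Rightarrow> 'k nmat) \<Rightarrow> nat \<Rightarrow> 'k nmat" where
  "ntcomp F eta theta = (\<lambda>n. nmul (fdim F n) (eta n) (theta n))"

definition ntid :: "'k::field fctr \<Rightarrow> nat \<Rightarrow> 'k nmat" where
  "ntid F = (\<lambda>n. nid (fdim F n))"

text \<open>(eta * theta)_{V_n} = eta_{V_n} \<otimes> theta_{V_n}, where theta : F \<Rightarrow> F'.\<close>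
definition nt_kron :: "'k::field fctr \<Rightarrow> 'k fctr \<Rightarrow> (nat \<Rightarrow> 'k nmat) \<Rightarrow> (nat \<Rightarrow> 'k nmat) \<Rightarrow> nat \<Rightarrow> 'k nmat" where
  "nt_kron F' F eta theta = (\<lambda>n. nkron (fdim F' n) (fdim F n) (eta n) (theta n))"

definition feq :: "(nat \<Rightarrow> nat \<Rightarrow> 'k::field wmat set) \<Rightarrow> 'k fctr \<Rightarrow> 'k fctr \<Rightarrow> bool" where
  "feq H F G \<longleftrightarrow> (\<forall>n. 1 \<le> n \<longrightarrow> fdim F n = fdim G n) \<and>
     (\<forall>n m f. 1 \<le> n \<longrightarrow> 1 \<le> m \<longrightarrow> f \<in> H n m \<longrightarrow> fmor F n m f = fmor G n m f)"

text \<open>On a morphism phi (in the hom space of degree d1+d2), write phi = \<Sum> a_i \<otimes> b_i with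
  a_i \<in> H1, b_i \<in> H2 (the isomorphism Hom_{H1 \<otimes> H2} \<cong> Hom_{H1} \<otimes> Hom_{H2}) and send it to
  \<Sum> F1(a_i) \<otimes> F2(b_i).\<close>
definition prod_fun :: "nat \<Rightarrow> (nat \<Rightarrow> nat \<Rightarrow> 'k::field wmat set) \<Rightarrow> (nat \<Rightarrow> nat \<Rightarrow> 'k wmat set)
    \<Rightarrow> 'k fctr \<Rightarrow> 'k fctr \<Rightarrow> 'k fctr" where
  "prod_fun d1 H1 H2 F1 F2 =
    \<lparr> fdim = (\<lambda>n. fdim F1 n * fdim F2 n),
      fmor = (\<lambda>n m phi. THE M. \<exists>ps. (\<forall>p\<in>set ps. fst p \<in> H1 n m \<and> snd p \<in> H2 n m) \<and>
         phi = (\<lambda>u w. \<Sum>p\<leftarrow>ps. wkron d1 (fst p) (snd p) u w) \<and>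
         M = (\<lambda>i j. \<Sum>p\<leftarrow>ps. nkron (fdim F2 m) (fdim F2 n)
                      (fmor F1 n m (fst p)) (fmor F2 n m (snd p)) i j)) \<rparr>"

definition tensorA :: "'k::field \<Rightarrow> nat \<Rightarrow> nat \<Rightarrow> 'k fctr \<Rightarrow> 'k fctr \<Rightarrow> 'k fctr" where
  "tensorA q d e F G = prod_fun d (HomA q d) (HomA q e) F G"

definition unitA :: "'k::field fctr" where
  "unitA = \<lparr> fdim = (\<lambda>n. 1), fmor = (\<lambda>n m c. (\<lambda>i j. if i = 0 \<and> j = 0 then c [] [] else 0)) \<rparr>"

definition starBA :: "'k::field \<Rightarrow> 'k \<Rightarrow> nat \<Rightarrow> nat \<Rightarrow> 'k fctr \<Rightarrow> 'k fctr \<Rightarrow> 'k fctr" where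
  "starBA Q q e d G F = prod_fun e (HomB Q q e) (HomA q d) G F"

end

theory Submission
  imports Defs
begin

text \<open>
  A morphism \<open>\<phi>\<close> of degree \<open>e + d\<close> commutes with \<open>T\<^sub>0, \<dots>, T\<^bsub>e-1\<^esub>\<close>, which act on the
  first \<open>e\<close> tensor factors only, and with \<open>T\<^bsub>e+1\<^esub>, \<dots>, T\<^bsub>e+d-1\<^esub>\<close>, which act on the last
  \<open>d\<close> factors only. Hence every slice of \<open>\<phi>\<close> in one group of factors is a homomorphism for
  the corresponding smaller Hecke algebra, and Gaussian elimination writes \<open>\<phi>\<close> as a finite
  sum \<open>\<Sum> a\<^sub>i \<otimes> b\<^sub>i\<close> with \<open>a\<^sub>i \<in> Hom\<^bsub>H(e)\<^esub>\<close> and \<open>b\<^sub>i \<in> Hom\<^bsub>H(d)\<^esub>\<close>. Since \<open>G\<close> and \<open>F\<close> are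
  linear on these spaces, \<open>\<Sum> G(a\<^sub>i) \<otimes> F(b\<^sub>i)\<close> does not depend on the chosen decomposition.
  With this description of \<open>G * F\<close> on morphisms, functoriality, naturality and condition (1)
  follow from the mixed-product rule for Kronecker products; condition (2) follows from the
  associativity of the Kronecker product, comparing two refinements of \<open>\<phi>\<close> into triple tensors;
  and condition (3) holds because the unit contributes the \<open>1 \<times> 1\<close> identity matrix.
\<close>

lemma finite_idx: "finite (idx n)"
proof -
  have "idx n = (\<lambda>j. of_int j - (of_nat n - 1) / 2) ` {0..<int n}"
    unfolding idx_def by auto
  then show ?thesis by simp
qed

lemma finite_words: "finite (words n d)"
  unfolding words_def using finite_lists_length_eq[OF finite_idx] by (simp add: conj_commute)

lemma length_words: "w \<in> words n d \<Longrightarrow> length w = d"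
  unfolding words_def by auto

lemma words_0: "words n 0 = {[]}"
  unfolding words_def by auto

lemma append_in_words_iff:
  "length x = d1 \<Longrightarrow> x @ u \<in> words n (d1 + d2) \<longleftrightarrow> x \<in> words n d1 \<and> u \<in> words n d2"
  unfolding words_def by auto

lemma words_add_iff:
  "w \<in> words n (d1 + d2) \<longleftrightarrow> take d1 w \<in> words n d1 \<and> drop d1 w \<in> words n d2"
  using append_in_words_iff[of "take d1 w" d1 "drop d1 w" n d2]
  by (cases "d1 \<le> length w") (auto simp: words_def)

lemma sum_words_add:
  "(\<Sum>v\<in>words n (d1 + d2). g v) = (\<Sum>y\<in>words n d1. \<Sum>z\<in>words n d2. g (y @ z))"
proof -
  have "bij_betw (\<lambda>(y, z). y @ z) (words n d1 \<times> words n d2) (words n (d1 + d2))"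
  proof (rule bij_betw_imageI)
    show "inj_on (\<lambda>(y, z). y @ z) (words n d1 \<times> words n d2)"
      by (auto simp: inj_on_def words_def)
    show "(\<lambda>(y, z). y @ z) ` (words n d1 \<times> words n d2) = words n (d1 + d2)"
    proof (intro equalityI subsetI)
      fix v assume "v \<in> words n (d1 + d2)"
      then show "v \<in> (\<lambda>(y, z). y @ z) ` (words n d1 \<times> words n d2)"
        by (intro image_eqI[of _ _ "(take d1 v, drop d1 v)"]) (auto simp: words_add_iff)
    qed (auto simp: words_def)
  qed
  then have "(\<Sum>v\<in>words n (d1 + d2). g v) = (\<Sum>(y, z)\<in>words n d1 \<times> words n d2. g (y @ z))"
    by (simp add: sum.reindex_bij_betw[symmetric] case_prod_unfold)
  then show ?thesis
    by (simp add: sum.cartesian_product)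
qed

lemma wmul_assoc: "wmul S (wmul S' f g) h = wmul S' f (wmul S g h)"
  unfolding wmul_def
  by (auto intro!: ext simp: sum_distrib_left sum_distrib_right mult.assoc intro: sum.swap)

lemma wmul_sum_list_left:
  "wmul S (\<lambda>u w. \<Sum>x\<leftarrow>xs. f x u w) g = (\<lambda>u w. \<Sum>x\<leftarrow>xs. wmul S (f x) g u w)"
  unfolding wmul_def by (intro ext, induction xs) (auto simp: sum.distrib algebra_simps)

lemma wmul_sum_list_right:
  "wmul S g (\<lambda>u w. \<Sum>x\<leftarrow>xs. f x u w) = (\<lambda>u w. \<Sum>x\<leftarrow>xs. wmul S g (f x) u w)"
  unfolding wmul_def by (intro ext, induction xs) (auto simp: sum.distrib algebra_simps)

lemma wmul_add_smult_left:
  "wmul S (\<lambda>u w. f u w + c * g u w) h = (\<lambda>u w. wmul S f h u w + c * wmul S g h u w)"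
  unfolding wmul_def by (simp add: sum.distrib sum_distrib_left algebra_simps)

lemma wmul_add_smult_right:
  "wmul S h (\<lambda>u w. f u w + c * g u w) = (\<lambda>u w. wmul S h f u w + c * wmul S h g u w)"
  unfolding wmul_def by (simp add: sum.distrib sum_distrib_left algebra_simps)

lemma wmat_on_wmul: "wmat_on p m d g \<Longrightarrow> wmat_on m n d f \<Longrightarrow> wmat_on p n d (wmul S g f)"
  unfolding wmat_on_def wmul_def by (metis (no_types, lifting) mult_not_zero sum.neutral)

lemma wmat_on_wid: "wmat_on n n d (wid n d)"
  unfolding wmat_on_def wid_def by auto

lemma wmul_wid_left: "wmat_on n k d f \<Longrightarrow> wmul (words n d) (wid n d) f = f"
proof (intro ext)
  fix u w assume "wmat_on n k d f"
  then have "(\<Sum>v\<in>words n d. wid n d u v * f v w) = (\<Sum>v\<in>words n d. if u = v then f u w else 0)"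
    unfolding wmat_on_def wid_def by (intro sum.cong) auto
  then show "wmul (words n d) (wid n d) f u w = f u w"
    using \<open>wmat_on n k d f\<close> unfolding wmul_def wmat_on_def by (auto simp: finite_words)
qed

lemma wmul_wid_right: "wmat_on k n d f \<Longrightarrow> wmul (words n d) f (wid n d) = f"
proof (intro ext)
  fix u w assume "wmat_on k n d f"
  then have "(\<Sum>v\<in>words n d. f u v * wid n d v w) = (\<Sum>v\<in>words n d. if v = w then f u w else 0)"
    unfolding wmat_on_def wid_def by (intro sum.cong) auto
  then show "wmul (words n d) f (wid n d) u w = f u w"
    using \<open>wmat_on k n d f\<close> unfolding wmul_def wmat_on_def by (auto simp: finite_words)
qed

lemma wkron_append:
  "length x = d1 \<Longrightarrow> length y = d1 \<Longrightarrow> wkron d1 a b (x @ u) (y @ w) = a x y * b u w"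
  unfolding wkron_def by simp

lemma wkron_sum_list_left:
  "wkron d (\<lambda>u w. \<Sum>x\<leftarrow>xs. f x u w) b = (\<lambda>u w. \<Sum>x\<leftarrow>xs. wkron d (f x) b u w)"
  unfolding wkron_def by (simp add: sum_list_mult_const)

lemma wkron_sum_list_right:
  "wkron d a (\<lambda>u w. \<Sum>x\<leftarrow>xs. f x u w) = (\<lambda>u w. \<Sum>x\<leftarrow>xs. wkron d a (f x) u w)"
  unfolding wkron_def by (simp add: sum_list_const_mult)

lemma wkron_smult_left: "wkron d (\<lambda>u w. c * a u w) b = (\<lambda>u w. c * wkron d a b u w)"
  unfolding wkron_def by (simp add: mult.assoc)

lemma wmat_on_wkron: "wmat_on m n d1 a \<Longrightarrow> wmat_on m n d2 b \<Longrightarrow> wmat_on m n (d1 + d2) (wkron d1 a b)"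
  unfolding wmat_on_def wkron_def by (auto simp: words_add_iff)

lemma wid_add: "wid n (d1 + d2) = wkron d1 (wid n d1) (wid n d2)"
proof (intro ext)
  fix u w :: "rat list"
  have "u = w \<longleftrightarrow> take d1 u = take d1 w \<and> drop d1 u = drop d1 w"
    by (metis append_take_drop_id)
  then show "wid n (d1 + d2) u w = wkron d1 (wid n d1) (wid n d2) u w"
    unfolding wid_def wkron_def using words_add_iff[of w n d1 d2] by auto
qed

lemma wmul_wkron:
  "wmul (words m (d1 + d2)) (wkron d1 a' b') (wkron d1 a b)
   = wkron d1 (wmul (words m d1) a' a) (wmul (words m d2) b' b)"
proof (intro ext)
  fix u w
  have "wmul (words m (d1 + d2)) (wkron d1 a' b') (wkron d1 a b) u w
      = (\<Sum>y\<in>words m d1. \<Sum>z\<in>words m d2.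
           (a' (take d1 u) y * a y (take d1 w)) * (b' (drop d1 u) z * b z (drop d1 w)))"
    unfolding wmul_def sum_words_add
    by (intro sum.cong refl) (auto simp: wkron_def length_words algebra_simps)
  also have "\<dots> = wkron d1 (wmul (words m d1) a' a) (wmul (words m d2) b' b) u w"
    unfolding wkron_def wmul_def by (simp add: sum_product)
  finally show "wmul (words m (d1 + d2)) (wkron d1 a' b') (wkron d1 a b) u w
      = wkron d1 (wmul (words m d1) a' a) (wmul (words m d2) b' b) u w" .
qed

lemma wmul_wkron_wid_right:
  assumes "length y = d1" "w \<in> words n d2"
  shows "wmul (words n (d1 + d2)) f (wkron d1 a (wid n d2)) U (y @ w)
       = (\<Sum>y'\<in>words n d1. f U (y' @ w) * a y' y)"
proof -
  have "wmul (words n (d1 + d2)) f (wkron d1 a (wid n d2)) U (y @ w)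
      = (\<Sum>y'\<in>words n d1. \<Sum>z\<in>words n d2. if z = w then f U (y' @ w) * a y' y else 0)"
    unfolding wmul_def sum_words_add using assms
    by (intro sum.cong refl) (auto simp: wkron_append length_words wid_def)
  then show ?thesis
    using assms by (simp add: finite_words)
qed

lemma wmul_wkron_wid_left:
  assumes "length x = d1" "u \<in> words m d2"
  shows "wmul (words m (d1 + d2)) (wkron d1 a (wid m d2)) f (x @ u) W
       = (\<Sum>x'\<in>words m d1. a x x' * f (x' @ u) W)"
proof -
  have "wmul (words m (d1 + d2)) (wkron d1 a (wid m d2)) f (x @ u) W
      = (\<Sum>x'\<in>words m d1. \<Sum>z\<in>words m d2. if z = u then a x x' * f (x' @ u) W else 0)"
    unfolding wmul_def sum_words_add using assms
    by (intro sum.cong refl) (auto simp: wkron_append length_words wid_def)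
  then show ?thesis
    using assms by (simp add: finite_words)
qed

lemma wmul_wid_wkron_right:
  assumes "y \<in> words n d1"
  shows "wmul (words n (d1 + d2)) f (wkron d1 (wid n d1) b) U (y @ w)
       = (\<Sum>w'\<in>words n d2. f U (y @ w') * b w' w)"
proof -
  have "wmul (words n (d1 + d2)) f (wkron d1 (wid n d1) b) U (y @ w)
      = (\<Sum>y'\<in>words n d1. if y' = y then (\<Sum>z\<in>words n d2. f U (y @ z) * b z w) else 0)"
    unfolding wmul_def sum_words_add using assms
    by (intro sum.cong refl) (auto simp: wkron_append length_words wid_def)
  then show ?thesis
    using assms by (simp add: finite_words)
qed

lemma wmul_wid_wkron_left:
  assumes "x \<in> words m d1"
  shows "wmul (words m (d1 + d2)) (wkron d1 (wid m d1) b) f (x @ u) W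
       = (\<Sum>u'\<in>words m d2. b u u' * f (x @ u') W)"
proof -
  have "wmul (words m (d1 + d2)) (wkron d1 (wid m d1) b) f (x @ u) W
      = (\<Sum>x'\<in>words m d1. if x' = x then (\<Sum>z\<in>words m d2. b u z * f (x @ z) W) else 0)"
    unfolding wmul_def sum_words_add using assms
    by (intro sum.cong refl) (auto simp: wkron_append length_words wid_def)
  then show ?thesis
    using assms by (simp add: finite_words)
qed

lemma HomJ_wmat_on: "f \<in> HomJ Q q d J n m \<Longrightarrow> wmat_on m n d f"
  unfolding HomJ_def by auto

lemma HomJ_nonzero_words: "f \<in> HomJ Q q d J n m \<Longrightarrow> f u w \<noteq> 0 \<Longrightarrow> u \<in> words m d \<and> w \<in> words n d"
  unfolding HomJ_def wmat_on_def by blast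

lemma HomJ_commute:
  "f \<in> HomJ Q q d J n m \<Longrightarrow> j \<in> J
   \<Longrightarrow> wmul (words n d) f (Tgen Q q n d j) = wmul (words m d) (Tgen Q q m d j) f"
  unfolding HomJ_def by auto

lemma HomJ_I:
  "wmat_on m n d f
   \<Longrightarrow> (\<And>j. j \<in> J \<Longrightarrow> wmul (words n d) f (Tgen Q q n d j) = wmul (words m d) (Tgen Q q m d j) f)
   \<Longrightarrow> f \<in> HomJ Q q d J n m"
  unfolding HomJ_def by auto

lemma zero_in_HomJ: "(\<lambda>u w. 0) \<in> HomJ Q q d J n m"
  unfolding HomJ_def wmat_on_def wmul_def by simp

lemma HomJ_add_smult:
  assumes "f \<in> HomJ Q q d J n m" "g \<in> HomJ Q q d J n m"
  shows "(\<lambda>u w. f u w + c * g u w) \<in> HomJ Q q d J n m"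
proof (rule HomJ_I)
  show "wmat_on m n d (\<lambda>u w. f u w + c * g u w)"
    using assms unfolding wmat_on_def
    by (metis HomJ_nonzero_words add.right_neutral mult_zero_right)
  fix j assume "j \<in> J"
  then show "wmul (words n d) (\<lambda>u w. f u w + c * g u w) (Tgen Q q n d j)
           = wmul (words m d) (Tgen Q q m d j) (\<lambda>u w. f u w + c * g u w)"
    by (simp add: wmul_add_smult_left wmul_add_smult_right HomJ_commute[OF assms(1)]
        HomJ_commute[OF assms(2)])
qed

lemma HomJ_smult: "f \<in> HomJ Q q d J n m \<Longrightarrow> (\<lambda>u w. c * f u w) \<in> HomJ Q q d J n m"
  using HomJ_add_smult[OF zero_in_HomJ] by simp

lemma HomJ_wmul:
  assumes f: "f \<in> HomJ Q q d J n m" and g: "g \<in> HomJ Q q d J m p"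
  shows "wmul (words m d) g f \<in> HomJ Q q d J n p"
proof (rule HomJ_I)
  show "wmat_on p n d (wmul (words m d) g f)"
    using f g by (auto intro: wmat_on_wmul HomJ_wmat_on)
  fix j assume "j \<in> J"
  then have "wmul (words n d) (wmul (words m d) g f) (Tgen Q q n d j)
      = wmul (words m d) (wmul (words m d) g (Tgen Q q m d j)) f"
    by (simp add: wmul_assoc HomJ_commute[OF f])
  also have "\<dots> = wmul (words p d) (Tgen Q q p d j) (wmul (words m d) g f)"
    using \<open>j \<in> J\<close> by (simp add: wmul_assoc HomJ_commute[OF g])
  finally show "wmul (words n d) (wmul (words m d) g f) (Tgen Q q n d j)
           = wmul (words p d) (Tgen Q q p d j) (wmul (words m d) g f)" .
qed

lemma wmat_on_Tgen: "wmat_on n n d (Tgen Q q n d j)"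
  unfolding wmat_on_def Tgen_def by auto

lemma wid_in_HomJ: "wid n d \<in> HomJ Q q d J n n"
  by (intro HomJ_I wmat_on_wid) (simp add: wmul_wid_left[OF wmat_on_Tgen] wmul_wid_right[OF wmat_on_Tgen])

lemma HomA_eq_HomJ: "HomA q d = HomJ Q q d {1..<d}"
proof -
  have "Tgen 1 q n d j = Tgen Q q n d j" if "j \<in> {1..<d}" for n j
  proof -
    have "j \<noteq> 0" using that by simp
    then show ?thesis unfolding Tgen_def by (intro ext) auto
  qed
  then show ?thesis
    unfolding HomA_def HomJ_def by (intro ext) simp
qed

lemma Kcoef_append:
  "length x = d1 \<Longrightarrow> length y = d1 \<Longrightarrow> 0 < d1
   \<Longrightarrow> Kcoef Q (x @ u) (y @ w) = Kcoef Q x y * (if u = w then 1 else 0)"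
  unfolding Kcoef_def Let_def by (simp add: nth_append list_update_append)

lemma Rcoef_append_low:
  assumes "length x = d1" "length y = d1" "1 \<le> j" "j < d1"
  shows "Rcoef q j (x @ u) (y @ w) = Rcoef q j x y * (if u = w then 1 else 0)"
proof -
  obtain k where j: "j = Suc k" using assms(3) by (cases j) auto
  have "(y @ w) ! k = y ! k" "(y @ w) ! j = y ! j"
    using assms j by (simp_all add: nth_append)
  moreover have "(y @ w)[k := b, j := c] = y[k := b, j := c] @ w" for b c
    using assms j by (simp add: list_update_append)
  moreover have "x @ u = v @ w \<longleftrightarrow> x = v \<and> u = w" if "length v = d1" for v
    using assms that by simp
  ultimately show ?thesis
    unfolding Rcoef_def Let_def j using assms j by auto
qed

lemma Rcoef_append_high:
  assumes "length x = d1" "length y = d1" "1 \<le> j"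
  shows "Rcoef q (d1 + j) (x @ u) (y @ w) = (if x = y then 1 else 0) * Rcoef q j u w"
proof -
  obtain k where j: "j = Suc k" using assms(3) by (cases j) auto
  have "(y @ w) ! (d1 + k) = w ! k" "(y @ w) ! Suc (d1 + k) = w ! Suc k"
    using assms by (simp_all add: nth_append)
  moreover have "(y @ w)[d1 + k := b, Suc (d1 + k) := c] = y @ w[k := b, Suc k := c]" for b c
    using assms by (simp add: list_update_append)
  moreover have "x @ u = y @ v \<longleftrightarrow> x = y \<and> u = v" for v
    using assms by simp
  ultimately show ?thesis
    unfolding Rcoef_def Let_def j by auto
qed

lemma Tgen_add_low:
  assumes j: "j < d1"
  shows "Tgen Q q n (d1 + d2) j = wkron d1 (Tgen Q q n d1 j) (wid n d2)"
proof (intro ext)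
  fix U W
  show "Tgen Q q n (d1 + d2) j U W = wkron d1 (Tgen Q q n d1 j) (wid n d2) U W"
  proof (cases "U \<in> words n (d1 + d2) \<and> W \<in> words n (d1 + d2)")
    case True
    then obtain x u y w where UW: "U = x @ u" "W = y @ w" and
      xy: "x \<in> words n d1" "y \<in> words n d1" and uw: "u \<in> words n d2" "w \<in> words n d2"
      by (metis append_take_drop_id words_add_iff)
    have "Tgen Q q n (d1 + d2) j U W
        = (if j = 0 then Kcoef Q (x @ u) (y @ w) else Rcoef q j (x @ u) (y @ w))"
      using True unfolding Tgen_def UW by simp
    also have "\<dots> = (if j = 0 then Kcoef Q x y else Rcoef q j x y) * (if u = w then 1 else 0)"
      using xy j by (simp add: length_words Kcoef_append Rcoef_append_low)
    also have "\<dots> = wkron d1 (Tgen Q q n d1 j) (wid n d2) U W"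
      using xy uw unfolding UW Tgen_def wid_def by (simp add: wkron_append length_words)
    finally show ?thesis .
  next
    case False
    then show ?thesis
      using wmat_on_wkron[OF wmat_on_Tgen wmat_on_wid] wmat_on_Tgen unfolding wmat_on_def by metis
  qed
qed

lemma Tgen_add_high:
  assumes j: "1 \<le> j"
  shows "Tgen Q q n (d1 + d2) (d1 + j) = wkron d1 (wid n d1) (Tgen Q q n d2 j)"
proof (intro ext)
  fix U W
  show "Tgen Q q n (d1 + d2) (d1 + j) U W = wkron d1 (wid n d1) (Tgen Q q n d2 j) U W"
  proof (cases "U \<in> words n (d1 + d2) \<and> W \<in> words n (d1 + d2)")
    case True
    then obtain x u y w where UW: "U = x @ u" "W = y @ w" and
      xy: "x \<in> words n d1" "y \<in> words n d1" and uw: "u \<in> words n d2" "w \<in> words n d2"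
      by (metis append_take_drop_id words_add_iff)
    have "Tgen Q q n (d1 + d2) (d1 + j) U W = Rcoef q (d1 + j) (x @ u) (y @ w)"
      using True j unfolding Tgen_def UW by simp
    also have "\<dots> = (if x = y then 1 else 0) * Rcoef q j u w"
      using xy j by (simp add: length_words Rcoef_append_high)
    also have "\<dots> = wkron d1 (wid n d1) (Tgen Q q n d2 j) U W"
      using xy uw j unfolding UW Tgen_def wid_def by (simp add: wkron_append length_words)
    finally show ?thesis .
  next
    case False
    then show ?thesis
      using wmat_on_wkron[OF wmat_on_wid wmat_on_Tgen] wmat_on_Tgen unfolding wmat_on_def by metis
  qed
qed

section \<open>Tensor decomposition of homomorphisms\<close>

definition restrict_words :: "nat \<Rightarrow> nat \<Rightarrow> nat \<Rightarrow> 'k::field wmat \<Rightarrow> 'k wmat" where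
  "restrict_words m n d f = (\<lambda>x y. if x \<in> words m d \<and> y \<in> words n d then f x y else 0)"

lemma wmat_on_restrict_words: "wmat_on m n d (restrict_words m n d f)"
  unfolding wmat_on_def restrict_words_def by auto

lemma slice_low_in_HomJ:
  assumes phi: "phi \<in> HomJ Q q (d1 + d2) J n m" and J1: "\<And>j. j \<in> J1 \<Longrightarrow> j < d1 \<and> j \<in> J"
    and u: "u \<in> words m d2" and w: "w \<in> words n d2"
  shows "restrict_words m n d1 (\<lambda>x y. phi (x @ u) (y @ w)) \<in> HomJ Q q d1 J1 n m"
    (is "?S \<in> _")
proof (rule HomJ_I[OF wmat_on_restrict_words])
  fix j assume "j \<in> J1"
  then have j: "j < d1" "j \<in> J" using J1 by auto
  show "wmul (words n d1) ?S (Tgen Q q n d1 j) = wmul (words m d1) (Tgen Q q m d1 j) ?S"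
  proof (intro ext)
    fix x y
    show "wmul (words n d1) ?S (Tgen Q q n d1 j) x y = wmul (words m d1) (Tgen Q q m d1 j) ?S x y"
    proof (cases "x \<in> words m d1 \<and> y \<in> words n d1")
      case True
      then have len: "length x = d1" "length y = d1" by (auto simp: length_words)
      have "wmul (words n d1) ?S (Tgen Q q n d1 j) x y
          = (\<Sum>y'\<in>words n d1. phi (x @ u) (y' @ w) * Tgen Q q n d1 j y' y)"
        using True unfolding wmul_def restrict_words_def by (intro sum.cong) auto
      also have "\<dots> = wmul (words n (d1 + d2)) phi (Tgen Q q n (d1 + d2) j) (x @ u) (y @ w)"
        using len w j by (simp add: Tgen_add_low wmul_wkron_wid_right)
      also have "\<dots> = wmul (words m (d1 + d2)) (Tgen Q q m (d1 + d2) j) phi (x @ u) (y @ w)"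
        by (simp add: HomJ_commute[OF phi j(2)])
      also have "\<dots> = (\<Sum>x'\<in>words m d1. Tgen Q q m d1 j x x' * phi (x' @ u) (y @ w))"
        using len u j by (simp add: Tgen_add_low wmul_wkron_wid_left)
      also have "\<dots> = wmul (words m d1) (Tgen Q q m d1 j) ?S x y"
        using True unfolding wmul_def restrict_words_def by (intro sum.cong) auto
      finally show ?thesis .
    next
      case False
      then show ?thesis
        using wmat_on_wmul[OF wmat_on_restrict_words wmat_on_Tgen]
          wmat_on_wmul[OF wmat_on_Tgen wmat_on_restrict_words]
        unfolding wmat_on_def by metis
    qed
  qed
qed

lemma slice_high_in_HomJ:
  assumes phi: "phi \<in> HomJ Q q (d1 + d2) J n m" and J2: "\<And>j. j \<in> J2 \<Longrightarrow> 1 \<le> j \<and> d1 + j \<in> J"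
    and x: "x \<in> words m d1" and y: "y \<in> words n d1"
  shows "restrict_words m n d2 (\<lambda>u w. phi (x @ u) (y @ w)) \<in> HomJ Q q d2 J2 n m"
    (is "?S \<in> _")
proof (rule HomJ_I[OF wmat_on_restrict_words])
  fix j assume "j \<in> J2"
  then have j: "1 \<le> j" "d1 + j \<in> J" using J2 by auto
  show "wmul (words n d2) ?S (Tgen Q q n d2 j) = wmul (words m d2) (Tgen Q q m d2 j) ?S"
  proof (intro ext)
    fix u w
    show "wmul (words n d2) ?S (Tgen Q q n d2 j) u w = wmul (words m d2) (Tgen Q q m d2 j) ?S u w"
    proof (cases "u \<in> words m d2 \<and> w \<in> words n d2")
      case True
      have "wmul (words n d2) ?S (Tgen Q q n d2 j) u w
          = (\<Sum>w'\<in>words n d2. phi (x @ u) (y @ w') * Tgen Q q n d2 j w' w)"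
        using True x y unfolding wmul_def restrict_words_def by (intro sum.cong) auto
      also have "\<dots> = wmul (words n (d1 + d2)) phi (Tgen Q q n (d1 + d2) (d1 + j)) (x @ u) (y @ w)"
        using y j by (simp add: Tgen_add_high wmul_wid_wkron_right)
      also have "\<dots> = wmul (words m (d1 + d2)) (Tgen Q q m (d1 + d2) (d1 + j)) phi (x @ u) (y @ w)"
        by (simp add: HomJ_commute[OF phi j(2)])
      also have "\<dots> = (\<Sum>u'\<in>words m d2. Tgen Q q m d2 j u u' * phi (x @ u') (y @ w))"
        using x j by (simp add: Tgen_add_high wmul_wid_wkron_left)
      also have "\<dots> = wmul (words m d2) (Tgen Q q m d2 j) ?S u w"
        using True x y unfolding wmul_def restrict_words_def by (intro sum.cong) auto
      finally show ?thesis .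
    next
      case False
      then show ?thesis
        using wmat_on_wmul[OF wmat_on_restrict_words wmat_on_Tgen]
          wmat_on_wmul[OF wmat_on_Tgen wmat_on_restrict_words]
        unfolding wmat_on_def by metis
    qed
  qed
qed

text \<open>Gaussian elimination: subtracting a suitable rank-one tensor \<open>a \<otimes> c\<close> kills one
  \<open>(x, y)\<close>-slice of \<open>M\<close> without leaving the subspaces.\<close>

lemma tensor_decomposition:
  fixes M :: "'a \<Rightarrow> 'a \<Rightarrow> 'b \<Rightarrow> 'b \<Rightarrow> 'k::field"
  assumes UA: "\<And>f g c. f \<in> UA \<Longrightarrow> g \<in> UA \<Longrightarrow> (\<lambda>x y. f x y + c * g x y) \<in> UA"
    and UB: "\<And>f g c. f \<in> UB \<Longrightarrow> g \<in> UB \<Longrightarrow> (\<lambda>u w. f u w + c * g u w) \<in> UB"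
    and UB_smult: "\<And>f c. f \<in> UB \<Longrightarrow> (\<lambda>u w. c * f u w) \<in> UB"
    and "finite S"
    and "\<And>x y u w. M x y u w \<noteq> 0 \<Longrightarrow> (x, y) \<in> S"
    and "\<And>u w. (\<lambda>x y. M x y u w) \<in> UA"
    and "\<And>x y. (\<lambda>u w. M x y u w) \<in> UB"
  shows "\<exists>ps. (\<forall>p\<in>set ps. fst p \<in> UA \<and> snd p \<in> UB) \<and>
              (\<forall>x y u w. M x y u w = (\<Sum>p\<leftarrow>ps. fst p x y * snd p u w))"
  using assms(4-)
proof (induction S arbitrary: M rule: finite_induct)
  case empty
  then show ?case by (intro exI[of _ "[]"]) auto
next
  case (insert s S)
  obtain x0 y0 where s: "s = (x0, y0)" by (cases s)
  show ?case
  proof (cases "\<forall>u w. M x0 y0 u w = 0")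
    case True
    then have "M x y u w \<noteq> 0 \<Longrightarrow> (x, y) \<in> S" for x y u w
      using insert.prems(1)[of x y u w] s by auto
    then show ?thesis using insert.IH[of M] insert.prems by blast
  next
    case False
    then obtain u0 w0 where nz: "M x0 y0 u0 w0 \<noteq> 0" by blast
    define a where "a x y = M x y u0 w0" for x y
    define c where "c u w = inverse (M x0 y0 u0 w0) * M x0 y0 u w" for u w
    define M' where "M' x y u w = M x y u w + (- a x y) * c u w" for x y u w
    have a: "a \<in> UA" unfolding a_def by (rule insert.prems(2))
    have c: "c \<in> UB" unfolding c_def by (rule UB_smult[OF insert.prems(3)])
    have "(x, y) \<in> S" if "M' x y u w \<noteq> 0" for x y u w
    proof (cases "(x, y) = (x0, y0)")
      case True
      with nz that show ?thesis unfolding M'_def a_def c_def by (simp add: field_simps)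
    next
      case False
      show ?thesis
      proof (rule ccontr)
        assume "(x, y) \<notin> S"
        with False have "M x y u w = 0" "a x y = 0"
          using insert.prems(1) unfolding a_def s by blast+
        with that show False unfolding M'_def by simp
      qed
    qed
    moreover have "(\<lambda>x y. M' x y u w) \<in> UA" for u w
      using UA[OF insert.prems(2) a, of u w "- c u w"] unfolding M'_def by (simp add: mult.commute)
    moreover have "(\<lambda>u w. M' x y u w) \<in> UB" for x y
      using UB[OF insert.prems(3) c, of x y "- a x y"] unfolding M'_def by simp
    ultimately obtain ps where ps: "\<forall>p\<in>set ps. fst p \<in> UA \<and> snd p \<in> UB"
      "\<forall>x y u w. M' x y u w = (\<Sum>p\<leftarrow>ps. fst p x y * snd p u w)"
      using insert.IH[of M'] by blast
    show ?thesis
    proof (intro exI[of _ "(a, c) # ps"] conjI)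
      show "\<forall>p\<in>set ((a, c) # ps). fst p \<in> UA \<and> snd p \<in> UB" using ps a c by auto
      show "\<forall>x y u w. M x y u w = (\<Sum>p\<leftarrow>(a, c) # ps. fst p x y * snd p u w)"
        using ps(2) unfolding M'_def by (auto simp: algebra_simps)
    qed
  qed
qed

definition wkron_decomp ::
    "nat \<Rightarrow> 'k::field wmat set \<Rightarrow> 'k wmat set \<Rightarrow> 'k wmat \<Rightarrow> ('k wmat \<times> 'k wmat) list \<Rightarrow> bool" where
  "wkron_decomp d A B phi ps \<longleftrightarrow> (\<forall>p\<in>set ps. fst p \<in> A \<and> snd p \<in> B) \<and>
     phi = (\<lambda>u w. \<Sum>p\<leftarrow>ps. wkron d (fst p) (snd p) u w)"

lemma HomJ_wkron_decomp:
  assumes phi: "phi \<in> HomJ Q q (d1 + d2) J n m"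
    and J1: "\<And>j. j \<in> J1 \<Longrightarrow> j < d1 \<and> j \<in> J" and J2: "\<And>j. j \<in> J2 \<Longrightarrow> 1 \<le> j \<and> d1 + j \<in> J"
  shows "\<exists>ps. wkron_decomp d1 (HomJ Q q d1 J1 n m) (HomJ Q q d2 J2 n m) phi ps"
proof -
  define M where "M x y u w =
    (if x \<in> words m d1 \<and> y \<in> words n d1 \<and> u \<in> words m d2 \<and> w \<in> words n d2
     then phi (x @ u) (y @ w) else 0)" for x y u w
  have "(\<lambda>x y. M x y u w) \<in> HomJ Q q d1 J1 n m" for u w
  proof (cases "u \<in> words m d2 \<and> w \<in> words n d2")
    case True
    then have "(\<lambda>x y. M x y u w) = restrict_words m n d1 (\<lambda>x y. phi (x @ u) (y @ w))"
      unfolding M_def restrict_words_def by auto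
    with True show ?thesis using slice_low_in_HomJ[OF phi J1] by simp
  next
    case False
    then have "(\<lambda>x y. M x y u w) = (\<lambda>x y. 0)" unfolding M_def by auto
    then show ?thesis using zero_in_HomJ by simp
  qed
  moreover have "(\<lambda>u w. M x y u w) \<in> HomJ Q q d2 J2 n m" for x y
  proof (cases "x \<in> words m d1 \<and> y \<in> words n d1")
    case True
    then have "(\<lambda>u w. M x y u w) = restrict_words m n d2 (\<lambda>u w. phi (x @ u) (y @ w))"
      unfolding M_def restrict_words_def by auto
    with True show ?thesis using slice_high_in_HomJ[OF phi J2] by simp
  next
    case False
    then have "(\<lambda>u w. M x y u w) = (\<lambda>u w. 0)" unfolding M_def by auto
    then show ?thesis using zero_in_HomJ by simp
  qed
  moreover have "M x y u w \<noteq> 0 \<Longrightarrow> (x, y) \<in> words m d1 \<times> words n d1" for x y u w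
    unfolding M_def by (auto split: if_splits)
  ultimately obtain ps where ps: "\<forall>p\<in>set ps. fst p \<in> HomJ Q q d1 J1 n m \<and> snd p \<in> HomJ Q q d2 J2 n m"
    and M: "\<forall>x y u w. M x y u w = (\<Sum>p\<leftarrow>ps. fst p x y * snd p u w)"
    using tensor_decomposition[of "HomJ Q q d1 J1 n m" "HomJ Q q d2 J2 n m" "words m d1 \<times> words n d1" M]
    by (auto simp: HomJ_add_smult HomJ_smult finite_words)
  have "phi U W = M (take d1 U) (take d1 W) (drop d1 U) (drop d1 W)" for U W
    using HomJ_nonzero_words[OF phi, of U W] by (auto simp: M_def words_add_iff)
  with M have "phi = (\<lambda>U W. \<Sum>p\<leftarrow>ps. wkron d1 (fst p) (snd p) U W)"
    by (intro ext) (simp add: wkron_def)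
  with ps show ?thesis unfolding wkron_decomp_def by blast
qed

lemma HomJ_interval_wkron_decomp:
  assumes "s \<le> 1" "phi \<in> HomJ Q q (e + d) {s..<e + d} n m"
  obtains ps where "wkron_decomp e (HomJ Q q e {s..<e} n m) (HomA q d n m) phi ps"
  using HomJ_wkron_decomp[OF assms(2), of "{s..<e}" "{1..<d}"] assms(1)
  unfolding HomA_eq_HomJ[of q d Q] by auto

section \<open>Kronecker products of matrices\<close>

lemma nmat_on_nkron:
  assumes A: "nmat_on rA cA A" and B: "nmat_on rB cB B"
  shows "nmat_on (rA * rB) (cA * cB) (nkron rB cB A B)"
  unfolding nmat_on_def
proof (intro allI impI)
  fix i j assume "nkron rB cB A B i j \<noteq> 0"
  then have "A (i div rB) (j div cB) \<noteq> 0" "B (i mod rB) (j mod cB) \<noteq> 0"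
    unfolding nkron_def by auto
  with A B have "i div rB < rA" "j div cB < cA" "i mod rB < rB" "j mod cB < cB"
    unfolding nmat_on_def by blast+
  moreover from this have "0 < rB" "0 < cB" by auto
  ultimately show "i < rA * rB \<and> j < cA * cB"
    using div_less_iff_less_mult[of rB i rA] div_less_iff_less_mult[of cB j cA] by auto
qed

lemma nmat_on_sum_list:
  "(\<And>x. x \<in> set xs \<Longrightarrow> nmat_on r c (f x)) \<Longrightarrow> nmat_on r c (\<lambda>i j. \<Sum>x\<leftarrow>xs. f x i j)"
proof (induction xs)
  case (Cons a xs)
  then have "nmat_on r c (\<lambda>i j. \<Sum>x\<leftarrow>xs. f x i j)" by auto
  show ?case
    unfolding nmat_on_def
  proof (intro allI impI)
    fix i j assume "(\<Sum>x\<leftarrow>a # xs. f x i j) \<noteq> 0"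
    then have "f a i j \<noteq> 0 \<or> (\<Sum>x\<leftarrow>xs. f x i j) \<noteq> 0" by auto
    with Cons.prems \<open>nmat_on r c (\<lambda>i j. \<Sum>x\<leftarrow>xs. f x i j)\<close> show "i < r \<and> j < c"
      unfolding nmat_on_def by auto
  qed
qed (simp add: nmat_on_def)

lemma nkron_nid: "nkron b b (nid a) (nid b) = nid (a * b)"
proof (intro ext)
  fix i j
  show "nkron b b (nid a) (nid b) i j = nid (a * b) i j"
  proof (cases "b = 0")
    case True
    then show ?thesis unfolding nkron_def nid_def by simp
  next
    case False
    have index_eq: "(i div b = j div b \<and> i mod b = j mod b) = (i = j)"
      by (metis div_mult_mod_eq)
    have index_bound: "(i div b < a) = (i < a * b)" using False
      by (simp add: div_less_iff_less_mult)
    have "i mod b < b" using False by simp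
    have "nkron b b (nid a) (nid b) i j
        = (if (i div b = j div b \<and> i mod b = j mod b) \<and> i div b < a then 1 else 0)"
      unfolding nkron_def nid_def using \<open>i mod b < b\<close> by simp
    also have "\<dots> = nid (a * b) i j" unfolding nid_def index_eq index_bound by simp
    finally show ?thesis .
  qed
qed

lemma nkron_nid1_left: "nmat_on r c B \<Longrightarrow> nkron r c (nid 1) B = B"
proof (intro ext)
  fix i j assume B: "nmat_on r c B"
  show "nkron r c (nid 1) B i j = B i j"
  proof (cases "i < r \<and> j < c")
    case True
    then show ?thesis unfolding nkron_def nid_def by simp
  next
    case False
    then have Bz: "B i j = 0" using B unfolding nmat_on_def by blast
    show ?thesis
    proof (cases "r = 0 \<or> c = 0")
      case True
      have "B (i mod r) (j mod c) = 0" using B True unfolding nmat_on_def by auto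
      then show ?thesis unfolding nkron_def nid_def using Bz by simp
    next
      case False2: False
      have "i div r \<noteq> 0 \<or> j div c \<noteq> 0"
        using False False2 div_less_iff_less_mult[of r i 1] div_less_iff_less_mult[of c j 1] by auto
      then show ?thesis unfolding nkron_def nid_def using Bz by auto
    qed
  qed
qed

lemma nkron_nid1_right: "nkron 1 1 A (nid 1) = A"
  unfolding nkron_def nid_def by (intro ext) auto

lemma sum_lessThan_mult: "(\<Sum>l<a * b. f l) = (\<Sum>i<a. \<Sum>j<b. f (i * b + j :: nat))"
proof -
  have "(\<Sum>l<a * b. f l) = (\<Sum>i<a. sum f {i * b..<i * b + b})"
    using sum.nat_group[of f b a] by simp
  also have "\<dots> = (\<Sum>i<a. \<Sum>j<b. f (i * b + j))"
    using sum.atLeastLessThan_shift_0[of f "_ * b" "_ * b + b"]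
    by (simp add: atLeast0LessThan comp_def)
  finally show ?thesis .
qed

lemma nkron_mixed:
  "nmul (rA2 * rB2) (nkron rB1 rB2 A1 B1) (nkron rB2 cB2 A2 B2)
   = nkron rB1 cB2 (nmul rA2 A1 A2) (nmul rB2 B1 B2)"
proof (intro ext)
  fix r c
  show "nmul (rA2 * rB2) (nkron rB1 rB2 A1 B1) (nkron rB2 cB2 A2 B2) r c
      = nkron rB1 cB2 (nmul rA2 A1 A2) (nmul rB2 B1 B2) r c"
  proof (cases "rB2 = 0")
    case False
    have "nmul (rA2 * rB2) (nkron rB1 rB2 A1 B1) (nkron rB2 cB2 A2 B2) r c
        = (\<Sum>a<rA2. \<Sum>b<rB2. (A1 (r div rB1) a * A2 a (c div cB2)) * (B1 (r mod rB1) b * B2 b (c mod cB2)))"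
      unfolding nmul_def sum_lessThan_mult
    proof (intro sum.cong refl)
      fix a b assume "b \<in> {..<rB2}"
      then have "(a * rB2 + b) div rB2 = a" "(a * rB2 + b) mod rB2 = b" using False by auto
      then show "nkron rB1 rB2 A1 B1 r (a * rB2 + b) * nkron rB2 cB2 A2 B2 (a * rB2 + b) c
          = (A1 (r div rB1) a * A2 a (c div cB2)) * (B1 (r mod rB1) b * B2 b (c mod cB2))"
        unfolding nkron_def by (simp add: algebra_simps)
    qed
    also have "\<dots> = nkron rB1 cB2 (nmul rA2 A1 A2) (nmul rB2 B1 B2) r c"
      unfolding nkron_def nmul_def by (simp add: sum_product)
    finally show ?thesis .
  qed (simp add: nmul_def nkron_def)
qed

lemma nkron_assoc: "nkron (b * c) (b' * c') A (nkron c c' B C) = nkron c c' (nkron b b' A B) C"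
proof -
  have div: "r div (b * c) = r div c div b" for r b c :: nat
    by (metis div_mult2_eq mult.commute)
  have mod_div: "r mod (b * c) div c = r div c mod b" for r b c :: nat
  proof (cases "c = 0")
    case False
    have "r mod (c * b) = c * (r div c mod b) + r mod c" by (rule mod_mult2_eq)
    with False show ?thesis by (simp add: mult.commute)
  qed simp
  have mod_mod: "r mod (b * c) mod c = r mod c" for r b c :: nat
    by (simp add: mod_mod_cancel)
  show ?thesis
    unfolding nkron_def div mod_div mod_mod by (simp add: mult.assoc)
qed

lemma nkron_sum_list_left:
  "nkron rB cB (\<lambda>i j. \<Sum>x\<leftarrow>xs. f x i j) B = (\<lambda>i j. \<Sum>x\<leftarrow>xs. nkron rB cB (f x) B i j)"
  unfolding nkron_def by (simp add: sum_list_mult_const)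

lemma nkron_sum_list_right:
  "nkron rB cB A (\<lambda>i j. \<Sum>x\<leftarrow>xs. f x i j) = (\<lambda>i j. \<Sum>x\<leftarrow>xs. nkron rB cB A (f x) i j)"
  unfolding nkron_def by (simp add: sum_list_const_mult)

lemma nkron_smult_left: "nkron rB cB (\<lambda>i j. c * A i j) B = (\<lambda>i j. c * nkron rB cB A B i j)"
  unfolding nkron_def by (simp add: mult.assoc)

lemma nmul_sum_list_left:
  "nmul N (\<lambda>i j. \<Sum>x\<leftarrow>xs. f x i j) B = (\<lambda>i j. \<Sum>x\<leftarrow>xs. nmul N (f x) B i j)"
  unfolding nmul_def by (intro ext, induction xs) (auto simp: sum.distrib algebra_simps)

lemma nmul_sum_list_right:
  "nmul N A (\<lambda>i j. \<Sum>x\<leftarrow>xs. f x i j) = (\<lambda>i j. \<Sum>x\<leftarrow>xs. nmul N A (f x) i j)"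
  unfolding nmul_def by (intro ext, induction xs) (auto simp: sum.distrib algebra_simps)

section \<open>The product functor\<close>

lemma functor_nmat_on:
  "is_functor d H F \<Longrightarrow> 1 \<le> n \<Longrightarrow> 1 \<le> m \<Longrightarrow> f \<in> H n m \<Longrightarrow> nmat_on (fdim F m) (fdim F n) (fmor F n m f)"
  unfolding is_functor_def by blast

lemma functor_fmor_add:
  "is_functor d H F \<Longrightarrow> 1 \<le> n \<Longrightarrow> 1 \<le> m \<Longrightarrow> f \<in> H n m \<Longrightarrow> g \<in> H n m
   \<Longrightarrow> fmor F n m (\<lambda>u w. f u w + g u w) = (\<lambda>i j. fmor F n m f i j + fmor F n m g i j)"
  unfolding is_functor_def by blast

lemma functor_fmor_smult:
  "is_functor d H F \<Longrightarrow> 1 \<le> n \<Longrightarrow> 1 \<le> m \<Longrightarrow> f \<in> H n m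
   \<Longrightarrow> fmor F n m (\<lambda>u w. c * f u w) = (\<lambda>i j. c * fmor F n m f i j)"
  unfolding is_functor_def by blast

lemma functor_fmor_wid: "is_functor d H F \<Longrightarrow> 1 \<le> n \<Longrightarrow> fmor F n n (wid n d) = nid (fdim F n)"
  unfolding is_functor_def by blast

lemma functor_fmor_wmul:
  "is_functor d H F \<Longrightarrow> 1 \<le> n \<Longrightarrow> 1 \<le> m \<Longrightarrow> 1 \<le> p \<Longrightarrow> f \<in> H n m \<Longrightarrow> g \<in> H m p
   \<Longrightarrow> fmor F n p (wmul (words m d) g f) = nmul (fdim F m) (fmor F m p g) (fmor F n m f)"
  unfolding is_functor_def by blast

lemma HomJ_sum_list:
  "(\<And>k. k \<in> set ks \<Longrightarrow> a k \<in> HomJ Q q d J n m) \<Longrightarrow> (\<lambda>u w. \<Sum>k\<leftarrow>ks. c k * a k u w) \<in> HomJ Q q d J n m"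
proof (induction ks)
  case (Cons k ks)
  then show ?case
    using HomJ_add_smult[of "\<lambda>u w. \<Sum>k\<leftarrow>ks. c k * a k u w" Q q d J n m "a k" "c k"]
    by (simp add: add.commute)
qed (simp add: zero_in_HomJ)

lemma fmor_sum_list:
  assumes F: "is_functor d (HomJ Q q d J) F" and nm: "1 \<le> n" "1 \<le> m"
    and a: "\<And>k. k \<in> set ks \<Longrightarrow> a k \<in> HomJ Q q d J n m"
  shows "fmor F n m (\<lambda>u w. \<Sum>k\<leftarrow>ks. c k * a k u w) = (\<lambda>i j. \<Sum>k\<leftarrow>ks. c k * fmor F n m (a k) i j)"
  using a
proof (induction ks)
  case Nil
  show ?case using functor_fmor_smult[OF F nm zero_in_HomJ, of 0] by simp
next
  case (Cons k ks)
  then have "a k \<in> HomJ Q q d J n m" "(\<lambda>u w. \<Sum>k\<leftarrow>ks. c k * a k u w) \<in> HomJ Q q d J n m"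
    by (auto intro: HomJ_sum_list)
  with Cons show ?case
    using functor_fmor_add[OF F nm HomJ_smult] functor_fmor_smult[OF F nm] by simp
qed

lemma fmor_tensor_cong:
  assumes F: "is_functor d (HomJ Q q d J) F" and nm: "1 \<le> n" "1 \<le> m"
    and a: "\<And>k. k \<in> set ks \<union> set ks' \<Longrightarrow> a k \<in> HomJ Q q d J n m"
    and eq: "\<And>u w z. (\<Sum>k\<leftarrow>ks. a k u w * \<beta> k z) = (\<Sum>k\<leftarrow>ks'. a k u w * \<beta> k z)"
  shows "(\<Sum>k\<leftarrow>ks. fmor F n m (a k) i j * \<beta> k z) = (\<Sum>k\<leftarrow>ks'. fmor F n m (a k) i j * \<beta> k z)"
proof -
  have "(\<lambda>u w. \<Sum>k\<leftarrow>ks. \<beta> k z * a k u w) = (\<lambda>u w. \<Sum>k\<leftarrow>ks'. \<beta> k z * a k u w)"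
    using eq by (simp add: mult.commute)
  then have "fmor F n m (\<lambda>u w. \<Sum>k\<leftarrow>ks. \<beta> k z * a k u w) i j
      = fmor F n m (\<lambda>u w. \<Sum>k\<leftarrow>ks'. \<beta> k z * a k u w) i j"
    by simp
  then show ?thesis
    using a by (simp add: fmor_sum_list[OF F nm] mult.commute)
qed

lemma wkron_decomp_entries:
  assumes "wkron_decomp d1 (HomJ Q q d1 J n m) B phi ps" "wkron_decomp d1 (HomJ Q q d1 J n m) B phi ps'"
  shows "(\<Sum>p\<leftarrow>ps. fst p x y * snd p u w) = (\<Sum>p\<leftarrow>ps'. fst p x y * snd p u w)"
proof (cases "length x = d1 \<and> length y = d1")
  case True
  from assms have "(\<Sum>p\<leftarrow>ps. wkron d1 (fst p) (snd p) (x @ u) (y @ w))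
    = (\<Sum>p\<leftarrow>ps'. wkron d1 (fst p) (snd p) (x @ u) (y @ w))"
    unfolding wkron_decomp_def by metis
  with True show ?thesis by (simp add: wkron_append)
next
  case False
  have "fst p x y = 0" if "p \<in> set ps \<union> set ps'" for p
  proof -
    from assms that have "fst p \<in> HomJ Q q d1 J n m"
      unfolding wkron_decomp_def by auto
    with False show ?thesis
      using HomJ_nonzero_words length_words by metis
  qed
  then show ?thesis by (simp cong: map_cong)
qed

definition fmor_kron :: "'k::field fctr \<Rightarrow> 'k fctr \<Rightarrow> nat \<Rightarrow> nat \<Rightarrow> ('k wmat \<times> 'k wmat) list \<Rightarrow> 'k nmat" where
  "fmor_kron F1 F2 n m ps =
    (\<lambda>i j. \<Sum>p\<leftarrow>ps. nkron (fdim F2 m) (fdim F2 n) (fmor F1 n m (fst p)) (fmor F2 n m (snd p)) i j)"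

lemma fmor_kron_unique:
  assumes F1: "is_functor d1 (HomJ Q1 q1 d1 J1) F1" and F2: "is_functor d2 (HomJ Q2 q2 d2 J2) F2"
    and nm: "1 \<le> n" "1 \<le> m"
    and ps: "wkron_decomp d1 (HomJ Q1 q1 d1 J1 n m) (HomJ Q2 q2 d2 J2 n m) phi ps"
    and ps': "wkron_decomp d1 (HomJ Q1 q1 d1 J1 n m) (HomJ Q2 q2 d2 J2 n m) phi ps'"
  shows "fmor_kron F1 F2 n m ps = fmor_kron F1 F2 n m ps'"
proof -
  have mem: "fst p \<in> HomJ Q1 q1 d1 J1 n m" "snd p \<in> HomJ Q2 q2 d2 J2 n m" if "p \<in> set ps \<union> set ps'" for p
    using ps ps' that unfolding wkron_decomp_def by auto
  have "(\<Sum>p\<leftarrow>ps. fmor F1 n m (fst p) i j * (\<lambda>p z. snd p (fst z) (snd z)) p z)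
      = (\<Sum>p\<leftarrow>ps'. fmor F1 n m (fst p) i j * (\<lambda>p z. snd p (fst z) (snd z)) p z)" for i j z
    by (rule fmor_tensor_cong[OF F1 nm]) (use mem wkron_decomp_entries[OF ps ps'] in auto)
  note first = this
  have "(\<Sum>p\<leftarrow>ps. snd p u w * (\<lambda>p z. fmor F1 n m (fst p) (fst z) (snd z)) p z)
      = (\<Sum>p\<leftarrow>ps'. snd p u w * (\<lambda>p z. fmor F1 n m (fst p) (fst z) (snd z)) p z)" for u w z
    using first[of "fst z" "snd z" "(u, w)"] by (simp add: mult.commute)
  note flipped = this
  have "(\<Sum>p\<leftarrow>ps. fmor F2 n m (snd p) i' j' * (\<lambda>p z. fmor F1 n m (fst p) (fst z) (snd z)) p z)
      = (\<Sum>p\<leftarrow>ps'. fmor F2 n m (snd p) i' j' * (\<lambda>p z. fmor F1 n m (fst p) (fst z) (snd z)) p z)"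
    for i' j' z
    by (rule fmor_tensor_cong[where a = snd and \<beta> = "\<lambda>p z. fmor F1 n m (fst p) (fst z) (snd z)",
          OF F2 nm _ flipped]) (use mem in auto)
  note second = this
  show ?thesis
    unfolding fmor_kron_def nkron_def
    using second[of _ _ "(_, _)"] by (simp add: mult.commute)
qed

lemma fmor_prod_fun:
  assumes F1: "is_functor d1 (HomJ Q1 q1 d1 J1) F1" and F2: "is_functor d2 (HomJ Q2 q2 d2 J2) F2"
    and nm: "1 \<le> n" "1 \<le> m"
    and ps: "wkron_decomp d1 (HomJ Q1 q1 d1 J1 n m) (HomJ Q2 q2 d2 J2 n m) phi ps"
  shows "fmor (prod_fun d1 (HomJ Q1 q1 d1 J1) (HomJ Q2 q2 d2 J2) F1 F2) n m phi = fmor_kron F1 F2 n m ps"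
proof -
  have "fmor (prod_fun d1 (HomJ Q1 q1 d1 J1) (HomJ Q2 q2 d2 J2) F1 F2) n m phi
      = (THE M. \<exists>ps. wkron_decomp d1 (HomJ Q1 q1 d1 J1 n m) (HomJ Q2 q2 d2 J2 n m) phi ps
                     \<and> M = fmor_kron F1 F2 n m ps)"
    unfolding prod_fun_def wkron_decomp_def fmor_kron_def by (simp add: conj_assoc)
  also have "\<dots> = fmor_kron F1 F2 n m ps"
  proof (rule the_equality)
    fix M assume "\<exists>ps'. wkron_decomp d1 (HomJ Q1 q1 d1 J1 n m) (HomJ Q2 q2 d2 J2 n m) phi ps'
                     \<and> M = fmor_kron F1 F2 n m ps'"
    then show "M = fmor_kron F1 F2 n m ps"
      using fmor_kron_unique[OF F1 F2 nm ps] by auto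
  qed (use ps in blast)
  finally show ?thesis .
qed

lemma fdim_prod_fun [simp]: "fdim (prod_fun d1 H1 H2 F1 F2) n = fdim F1 n * fdim F2 n"
  unfolding prod_fun_def by simp

lemma sum_list_concat_map: "(\<Sum>x\<leftarrow>concat (map g xs). f x) = (\<Sum>a\<leftarrow>xs. \<Sum>x\<leftarrow>g a. f x)"
  by (induction xs) auto

lemma wkron_decomp_add:
  "wkron_decomp d A B f ps \<Longrightarrow> wkron_decomp d A B g ps'
   \<Longrightarrow> wkron_decomp d A B (\<lambda>u w. f u w + g u w) (ps @ ps')"
  unfolding wkron_decomp_def by auto

lemma wkron_decomp_smult:
  "wkron_decomp d (HomJ Q q d' J n m) B f ps
   \<Longrightarrow> wkron_decomp d (HomJ Q q d' J n m) B (\<lambda>u w. c * f u w) (map (\<lambda>p. (\<lambda>u w. c * fst p u w, snd p)) ps)"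
  unfolding wkron_decomp_def by (auto simp: HomJ_smult wkron_smult_left sum_list_const_mult o_def)

lemma wkron_decomp_wid:
  "wkron_decomp d1 (HomJ Q1 q1 d1 J1 n n) (HomJ Q2 q2 d2 J2 n n) (wid n (d1 + d2)) [(wid n d1, wid n d2)]"
  unfolding wkron_decomp_def by (simp add: wid_in_HomJ wid_add)

lemma wkron_decomp_wmul:
  assumes "wkron_decomp d1 (HomJ Q1 q1 d1 J1 n m) (HomJ Q2 q2 d2 J2 n m) f ps"
    and "wkron_decomp d1 (HomJ Q1 q1 d1 J1 m p) (HomJ Q2 q2 d2 J2 m p) g ps'"
  shows "wkron_decomp d1 (HomJ Q1 q1 d1 J1 n p) (HomJ Q2 q2 d2 J2 n p) (wmul (words m (d1 + d2)) g f)
           [(wmul (words m d1) (fst r) (fst s), wmul (words m d2) (snd r) (snd s)). r \<leftarrow> ps', s \<leftarrow> ps]"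
proof -
  from assms have "wmul (words m (d1 + d2)) g f
      = (\<lambda>u w. \<Sum>r\<leftarrow>ps'. \<Sum>s\<leftarrow>ps.
           wmul (words m (d1 + d2)) (wkron d1 (fst r) (snd r)) (wkron d1 (fst s) (snd s)) u w)"
    unfolding wkron_decomp_def by (simp add: wmul_sum_list_left wmul_sum_list_right)
  also have "\<dots> = (\<lambda>u w. \<Sum>x\<leftarrow>[(wmul (words m d1) (fst r) (fst s), wmul (words m d2) (snd r) (snd s)).
                          r \<leftarrow> ps', s \<leftarrow> ps]. wkron d1 (fst x) (snd x) u w)"
    by (simp add: sum_list_concat_map wmul_wkron o_def)
  finally show ?thesis
    using assms unfolding wkron_decomp_def by (auto intro: HomJ_wmul)
qed

lemma nmat_on_fmor_kron:
  assumes F1: "is_functor d1 (HomJ Q1 q1 d1 J1) F1" and F2: "is_functor d2 (HomJ Q2 q2 d2 J2) F2"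
    and nm: "1 \<le> n" "1 \<le> m" and ps: "wkron_decomp d1 (HomJ Q1 q1 d1 J1 n m) (HomJ Q2 q2 d2 J2 n m) phi ps"
  shows "nmat_on (fdim F1 m * fdim F2 m) (fdim F1 n * fdim F2 n) (fmor_kron F1 F2 n m ps)"
  unfolding fmor_kron_def using ps
  by (intro nmat_on_sum_list nmat_on_nkron functor_nmat_on[OF F1 nm] functor_nmat_on[OF F2 nm])
    (auto simp: wkron_decomp_def)

lemma fmor_kron_smult:
  assumes F1: "is_functor d1 (HomJ Q1 q1 d1 J1) F1" and nm: "1 \<le> n" "1 \<le> m"
    and ps: "\<forall>p\<in>set ps. fst p \<in> HomJ Q1 q1 d1 J1 n m"
  shows "fmor_kron F1 F2 n m (map (\<lambda>p. (\<lambda>u w. c * fst p u w, snd p)) ps)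
       = (\<lambda>i j. c * fmor_kron F1 F2 n m ps i j)"
  using ps unfolding fmor_kron_def
  by (simp add: functor_fmor_smult[OF F1 nm] nkron_smult_left sum_list_const_mult o_def cong: map_cong)

lemma fmor_kron_wmul:
  assumes F1: "is_functor d1 (HomJ Q1 q1 d1 J1) F1" and F2: "is_functor d2 (HomJ Q2 q2 d2 J2) F2"
    and nmp: "1 \<le> n" "1 \<le> m" "1 \<le> p"
    and ps: "\<forall>s\<in>set ps. fst s \<in> HomJ Q1 q1 d1 J1 n m \<and> snd s \<in> HomJ Q2 q2 d2 J2 n m"
    and ps': "\<forall>r\<in>set ps'. fst r \<in> HomJ Q1 q1 d1 J1 m p \<and> snd r \<in> HomJ Q2 q2 d2 J2 m p"
  shows "fmor_kron F1 F2 n p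
         [(wmul (words m d1) (fst r) (fst s), wmul (words m d2) (snd r) (snd s)). r \<leftarrow> ps', s \<leftarrow> ps]
       = nmul (fdim F1 m * fdim F2 m) (fmor_kron F1 F2 m p ps') (fmor_kron F1 F2 n m ps)"
proof -
  have "fmor_kron F1 F2 n p
         [(wmul (words m d1) (fst r) (fst s), wmul (words m d2) (snd r) (snd s)). r \<leftarrow> ps', s \<leftarrow> ps]
      = (\<lambda>i j. \<Sum>r\<leftarrow>ps'. \<Sum>s\<leftarrow>ps. nkron (fdim F2 p) (fdim F2 n)
          (nmul (fdim F1 m) (fmor F1 m p (fst r)) (fmor F1 n m (fst s)))
          (nmul (fdim F2 m) (fmor F2 m p (snd r)) (fmor F2 n m (snd s))) i j)"
    unfolding fmor_kron_def using ps ps'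
    by (simp add: sum_list_concat_map o_def functor_fmor_wmul[OF F1 nmp] functor_fmor_wmul[OF F2 nmp]
        cong: map_cong)
  also have "\<dots> = nmul (fdim F1 m * fdim F2 m) (fmor_kron F1 F2 m p ps') (fmor_kron F1 F2 n m ps)"
    unfolding fmor_kron_def nmul_sum_list_left nmul_sum_list_right nkron_mixed ..
  finally show ?thesis .
qed

lemma prod_fun_is_functor:
  assumes F1: "is_functor d1 (HomJ Q1 q1 d1 J1) F1" and F2: "is_functor d2 (HomJ Q2 q2 d2 J2) F2"
    and decomp: "\<And>n m phi. 1 \<le> n \<Longrightarrow> 1 \<le> m \<Longrightarrow> phi \<in> H n m
      \<Longrightarrow> \<exists>ps. wkron_decomp d1 (HomJ Q1 q1 d1 J1 n m) (HomJ Q2 q2 d2 J2 n m) phi ps"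
  shows "is_functor (d1 + d2) H (prod_fun d1 (HomJ Q1 q1 d1 J1) (HomJ Q2 q2 d2 J2) F1 F2)"
    (is "is_functor _ _ ?P")
  unfolding is_functor_def
proof (intro conjI allI impI)
  fix n m f assume nm: "1 \<le> n" "1 \<le> m" and "f \<in> H n m"
  then obtain ps where "wkron_decomp d1 (HomJ Q1 q1 d1 J1 n m) (HomJ Q2 q2 d2 J2 n m) f ps"
    using decomp by blast
  then show "nmat_on (fdim ?P m) (fdim ?P n) (fmor ?P n m f)"
    by (simp add: fmor_prod_fun[OF F1 F2 nm] nmat_on_fmor_kron[OF F1 F2 nm])
next
  fix n m f g and c :: 'a assume nm: "1 \<le> n" "1 \<le> m" and "f \<in> H n m" "g \<in> H n m"
  then obtain ps ps' where ps: "wkron_decomp d1 (HomJ Q1 q1 d1 J1 n m) (HomJ Q2 q2 d2 J2 n m) f ps"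
    and ps': "wkron_decomp d1 (HomJ Q1 q1 d1 J1 n m) (HomJ Q2 q2 d2 J2 n m) g ps'"
    using decomp by meson
  show "fmor ?P n m (\<lambda>u w. f u w + g u w) = (\<lambda>i j. fmor ?P n m f i j + fmor ?P n m g i j)"
    using fmor_prod_fun[OF F1 F2 nm wkron_decomp_add[OF ps ps']]
    by (simp add: fmor_prod_fun[OF F1 F2 nm ps] fmor_prod_fun[OF F1 F2 nm ps'] fmor_kron_def)
  have "\<forall>p\<in>set ps. fst p \<in> HomJ Q1 q1 d1 J1 n m"
    using ps unfolding wkron_decomp_def by blast
  then show "fmor ?P n m (\<lambda>u w. c * f u w) = (\<lambda>i j. c * fmor ?P n m f i j)"
    by (simp add: fmor_prod_fun[OF F1 F2 nm ps] fmor_prod_fun[OF F1 F2 nm wkron_decomp_smult[OF ps]]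
        fmor_kron_smult[OF F1 nm])
next
  fix n :: nat assume n: "1 \<le> n"
  show "fmor ?P n n (wid n (d1 + d2)) = nid (fdim ?P n)"
    by (simp add: fmor_prod_fun[OF F1 F2 n n wkron_decomp_wid] fmor_kron_def
        functor_fmor_wid[OF F1 n] functor_fmor_wid[OF F2 n] nkron_nid)
next
  fix n m p f g assume nmp: "1 \<le> n" "1 \<le> m" "1 \<le> p" and "f \<in> H n m" "g \<in> H m p"
  then obtain ps ps' where ps: "wkron_decomp d1 (HomJ Q1 q1 d1 J1 n m) (HomJ Q2 q2 d2 J2 n m) f ps"
    and ps': "wkron_decomp d1 (HomJ Q1 q1 d1 J1 m p) (HomJ Q2 q2 d2 J2 m p) g ps'"
    using decomp by meson
  show "fmor ?P n p (wmul (words m (d1 + d2)) g f) = nmul (fdim ?P m) (fmor ?P m p g) (fmor ?P n m f)"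
  proof -
    have "\<forall>s\<in>set ps. fst s \<in> HomJ Q1 q1 d1 J1 n m \<and> snd s \<in> HomJ Q2 q2 d2 J2 n m"
      "\<forall>r\<in>set ps'. fst r \<in> HomJ Q1 q1 d1 J1 m p \<and> snd r \<in> HomJ Q2 q2 d2 J2 m p"
      using ps ps' unfolding wkron_decomp_def by blast+
    then show ?thesis
      using nmp by (simp add: fmor_prod_fun[OF F1 F2 _ _ wkron_decomp_wmul[OF ps ps']]
          fmor_prod_fun[OF F1 F2 _ _ ps] fmor_prod_fun[OF F1 F2 _ _ ps'] fmor_kron_wmul[OF F1 F2 nmp])
  qed
qed

lemma prod_fun_interval_is_functor:
  assumes "s \<le> 1" "is_functor e (HomJ Q q e {s..<e}) G" "is_functor d (HomA q d) F"
  shows "is_functor (e + d) (HomJ Q q (e + d) {s..<e + d}) (prod_fun e (HomJ Q q e {s..<e}) (HomA q d) G F)"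
  using assms prod_fun_is_functor[of e Q q "{s..<e}" G d 1 q "{1..<d}" F]
    HomJ_interval_wkron_decomp[OF assms(1)]
  unfolding HomA_def by metis

lemma prod_fun_nat_trans:
  assumes G: "is_functor d1 (HomJ Q1 q1 d1 J1) G" and G': "is_functor d1 (HomJ Q1 q1 d1 J1) G'"
    and F: "is_functor d2 (HomJ Q2 q2 d2 J2) F" and F': "is_functor d2 (HomJ Q2 q2 d2 J2) F'"
    and decomp: "\<And>n m phi. 1 \<le> n \<Longrightarrow> 1 \<le> m \<Longrightarrow> phi \<in> H n m
      \<Longrightarrow> \<exists>ps. wkron_decomp d1 (HomJ Q1 q1 d1 J1 n m) (HomJ Q2 q2 d2 J2 n m) phi ps"
    and eta: "nat_trans (HomJ Q1 q1 d1 J1) G G' eta" and theta: "nat_trans (HomJ Q2 q2 d2 J2) F F' theta"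
  shows "nat_trans H (prod_fun d1 (HomJ Q1 q1 d1 J1) (HomJ Q2 q2 d2 J2) G F)
           (prod_fun d1 (HomJ Q1 q1 d1 J1) (HomJ Q2 q2 d2 J2) G' F') (nt_kron F' F eta theta)"
    (is "nat_trans H ?P ?P' _")
  unfolding nat_trans_def
proof (intro conjI allI impI)
  fix n :: nat assume "1 \<le> n"
  with eta theta show "nmat_on (fdim ?P' n) (fdim ?P n) (nt_kron F' F eta theta n)"
    unfolding nat_trans_def nt_kron_def by (simp add: nmat_on_nkron)
next
  fix n m f assume nm: "1 \<le> n" "1 \<le> m" and "f \<in> H n m"
  then obtain ps where ps: "wkron_decomp d1 (HomJ Q1 q1 d1 J1 n m) (HomJ Q2 q2 d2 J2 n m) f ps"
    using decomp by blast
  then have mem: "fst p \<in> HomJ Q1 q1 d1 J1 n m" "snd p \<in> HomJ Q2 q2 d2 J2 n m" if "p \<in> set ps" for p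
    using that unfolding wkron_decomp_def by auto
  have "nmul (fdim G' n * fdim F' n) (fmor_kron G' F' n m ps) (nt_kron F' F eta theta n)
      = (\<lambda>i j. \<Sum>p\<leftarrow>ps. nkron (fdim F' m) (fdim F n)
           (nmul (fdim G' n) (fmor G' n m (fst p)) (eta n))
           (nmul (fdim F' n) (fmor F' n m (snd p)) (theta n)) i j)"
    unfolding fmor_kron_def nt_kron_def nmul_sum_list_left nkron_mixed ..
  also have "\<dots> = (\<lambda>i j. \<Sum>p\<leftarrow>ps. nkron (fdim F' m) (fdim F n)
           (nmul (fdim G m) (eta m) (fmor G n m (fst p)))
           (nmul (fdim F m) (theta m) (fmor F n m (snd p))) i j)"
    using eta theta nm mem unfolding nat_trans_def by (simp cong: map_cong)
  also have "\<dots> = nmul (fdim G m * fdim F m) (nt_kron F' F eta theta m) (fmor_kron G F n m ps)"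
    unfolding fmor_kron_def nt_kron_def nmul_sum_list_right nkron_mixed ..
  finally show "nmul (fdim ?P' n) (fmor ?P' n m f) (nt_kron F' F eta theta n)
      = nmul (fdim ?P m) (nt_kron F' F eta theta m) (fmor ?P n m f)"
    by (simp add: fmor_prod_fun[OF G F nm ps] fmor_prod_fun[OF G' F' nm ps])
qed

section \<open>Unit and associativity laws\<close>

lemma wid_0_in_HomA: "wid k 0 \<in> HomA q 0 n m"
  unfolding HomA_def HomJ_def wmat_on_def wid_def by (simp add: words_0)

lemma unitA_is_functor: "is_functor 0 (HomA q 0) unitA"
  unfolding is_functor_def unitA_def nmat_on_def nid_def wid_def wmul_def nmul_def
  by (auto intro!: ext simp: words_0)

lemma fmor_unitA_wid: "fmor unitA n m (wid k 0) = nid 1"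
  unfolding unitA_def wid_def nid_def by (auto intro!: ext simp: words_0)

lemma fdim_unitA [simp]: "fdim unitA n = 1"
  unfolding unitA_def by simp

lemma prod_fun_unit_left:
  assumes F: "is_functor d (HomJ Q q d J) F"
  shows "feq (HomJ Q q d J) (prod_fun 0 (HomA q 0) (HomJ Q q d J) unitA F) F"
  unfolding feq_def
proof (intro conjI allI impI)
  fix n m phi assume nm: "1 \<le> n" "1 \<le> m" and phi: "phi \<in> HomJ Q q d J n m"
  have "wkron_decomp 0 (HomA q 0 n m) (HomJ Q q d J n m) phi [(wid n 0, phi)]"
    using phi wid_0_in_HomA unfolding wkron_decomp_def wkron_def wid_def by (simp add: words_0)
  then show "fmor (prod_fun 0 (HomA q 0) (HomJ Q q d J) unitA F) n m phi = fmor F n m phi"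
    using unitA_is_functor[of q] nkron_nid1_left[OF functor_nmat_on[OF F nm phi]] unfolding HomA_def
    by (simp add: fmor_prod_fun[OF _ F nm] fmor_kron_def fmor_unitA_wid)
qed simp

lemma prod_fun_unit_right:
  assumes G: "is_functor e (HomJ Q q e J) G"
  shows "feq (HomJ Q q e J) (prod_fun e (HomJ Q q e J) (HomA q 0) G unitA) G"
  unfolding feq_def
proof (intro conjI allI impI)
  fix n m phi assume nm: "1 \<le> n" "1 \<le> m" and phi: "phi \<in> HomJ Q q e J n m"
  have "phi u w = wkron e phi (wid n 0) u w" for u w
  proof (cases "length u \<le> e \<and> length w \<le> e")
    case False
    then have "phi u w = 0"
      using HomJ_nonzero_words[OF phi, of u w] length_words by fastforce
    with False show ?thesis
      unfolding wkron_def wid_def by (auto simp: words_0)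
  qed (simp add: wkron_def wid_def words_0)
  then have "wkron_decomp e (HomJ Q q e J n m) (HomA q 0 n m) phi [(phi, wid n 0)]"
    using phi wid_0_in_HomA unfolding wkron_decomp_def by auto
  then show "fmor (prod_fun e (HomJ Q q e J) (HomA q 0) G unitA) n m phi = fmor G n m phi"
    using unitA_is_functor[of q] nkron_nid1_right[of "fmor G n m phi"] unfolding HomA_def
    by (simp add: fmor_prod_fun[OF G _ nm] fmor_kron_def fmor_unitA_wid)
qed simp

lemma wkron_assoc: "wkron (e + d1) (wkron e a b) c = wkron e a (wkron d1 b c)"
  unfolding wkron_def by (intro ext) (simp add: drop_take add.commute mult.assoc)

definition wkron3_decomp :: "nat \<Rightarrow> nat \<Rightarrow> 'k::field wmat set \<Rightarrow> 'k wmat set \<Rightarrow> 'k wmat set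
    \<Rightarrow> 'k wmat \<Rightarrow> ('k wmat \<times> 'k wmat \<times> 'k wmat) list \<Rightarrow> bool" where
  "wkron3_decomp e d1 A B C phi ts \<longleftrightarrow>
     (\<forall>t\<in>set ts. fst t \<in> A \<and> fst (snd t) \<in> B \<and> snd (snd t) \<in> C) \<and>
     phi = (\<lambda>u w. \<Sum>t\<leftarrow>ts. wkron e (fst t) (wkron d1 (fst (snd t)) (snd (snd t))) u w)"

definition fmor_kron3 :: "'k::field fctr \<Rightarrow> 'k fctr \<Rightarrow> 'k fctr \<Rightarrow> nat \<Rightarrow> nat
    \<Rightarrow> ('k wmat \<times> 'k wmat \<times> 'k wmat) list \<Rightarrow> 'k nmat" where
  "fmor_kron3 F0 F1 F2 n m ts = (\<lambda>i j. \<Sum>t\<leftarrow>ts. nkron (fdim F2 m) (fdim F2 n)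
     (nkron (fdim F1 m) (fdim F1 n) (fmor F0 n m (fst t)) (fmor F1 n m (fst (snd t))))
     (fmor F2 n m (snd (snd t))) i j)"

lemma wkron3_decomp_entries:
  assumes ts: "wkron3_decomp e d1 (HomJ Q0 q0 e J0 n m) (HomJ Q1 q1 d1 J1 n m) C phi ts"
    and ts': "wkron3_decomp e d1 (HomJ Q0 q0 e J0 n m) (HomJ Q1 q1 d1 J1 n m) C phi ts'"
  shows "(\<Sum>t\<leftarrow>ts. fst t x y * fst (snd t) u w * snd (snd t) v z)
       = (\<Sum>t\<leftarrow>ts'. fst t x y * fst (snd t) u w * snd (snd t) v z)"
proof (cases "length u = d1 \<and> length w = d1")
  case True
  let ?pairs = "map (\<lambda>t. (fst t, wkron d1 (fst (snd t)) (snd (snd t))))"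
  have "wkron_decomp e (HomJ Q0 q0 e J0 n m) UNIV phi (?pairs ts)"
    "wkron_decomp e (HomJ Q0 q0 e J0 n m) UNIV phi (?pairs ts')"
    using ts ts' unfolding wkron3_decomp_def wkron_decomp_def by (auto simp: o_def)
  from wkron_decomp_entries[OF this, of x y "u @ v" "w @ z"] True show ?thesis
    by (simp add: o_def wkron_append mult.assoc)
next
  case False
  have "fst (snd t) u w = 0" if "t \<in> set ts \<union> set ts'" for t
  proof -
    from ts ts' that have "fst (snd t) \<in> HomJ Q1 q1 d1 J1 n m"
      unfolding wkron3_decomp_def by auto
    with False show ?thesis
      using HomJ_nonzero_words length_words by metis
  qed
  then show ?thesis by (simp cong: map_cong)
qed

lemma fmor_tensor3_cong:
  assumes G: "is_functor e (HomJ Q0 q0 e J0) G" and F1: "is_functor d1 (HomJ Q1 q1 d1 J1) F1"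
    and F2: "is_functor d2 (HomJ Q2 q2 d2 J2) F2" and nm: "1 \<le> n" "1 \<le> m"
    and mem: "\<And>t. t \<in> set ts \<union> set ts' \<Longrightarrow> fst t \<in> HomJ Q0 q0 e J0 n m
      \<and> fst (snd t) \<in> HomJ Q1 q1 d1 J1 n m \<and> snd (snd t) \<in> HomJ Q2 q2 d2 J2 n m"
    and eq: "\<And>x y u w v z. (\<Sum>t\<leftarrow>ts. fst t x y * fst (snd t) u w * snd (snd t) v z)
                         = (\<Sum>t\<leftarrow>ts'. fst t x y * fst (snd t) u w * snd (snd t) v z)"
  shows "(\<Sum>t\<leftarrow>ts. fmor G n m (fst t) i j * fmor F1 n m (fst (snd t)) i' j'
             * fmor F2 n m (snd (snd t)) i2 j2)
       = (\<Sum>t\<leftarrow>ts'. fmor G n m (fst t) i j * fmor F1 n m (fst (snd t)) i' j'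
             * fmor F2 n m (snd (snd t)) i2 j2)"
proof -
  \<comment> \<open>Apply \<open>G\<close>, \<open>F1\<close>, \<open>F2\<close> one factor at a time; the other two factors are carried along
    in \<open>\<beta>\<close>.\<close>
  define \<beta>0 where
    "\<beta>0 t z = fst (snd t) (fst (fst z)) (snd (fst z)) * snd (snd t) (fst (snd z)) (snd (snd z))"
    for t :: "'a wmat \<times> 'a wmat \<times> 'a wmat" and z :: "(rat list \<times> rat list) \<times> rat list \<times> rat list"
  have "(\<Sum>t\<leftarrow>ts. fmor G n m (fst t) i j * \<beta>0 t z) = (\<Sum>t\<leftarrow>ts'. fmor G n m (fst t) i j * \<beta>0 t z)" for i j z
    by (rule fmor_tensor_cong[where a = fst, OF G nm]) (use mem eq in \<open>auto simp: \<beta>0_def mult.assoc\<close>)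
  note step0 = this
  define \<beta>1 where
    "\<beta>1 t z = fmor G n m (fst t) (fst (fst z)) (snd (fst z)) * snd (snd t) (fst (snd z)) (snd (snd z))"
    for t :: "'a wmat \<times> 'a wmat \<times> 'a wmat" and z :: "(nat \<times> nat) \<times> rat list \<times> rat list"
  have "(\<Sum>t\<leftarrow>ts. fmor F1 n m (fst (snd t)) i j * \<beta>1 t z) = (\<Sum>t\<leftarrow>ts'. fmor F1 n m (fst (snd t)) i j * \<beta>1 t z)"
    for i j z
  proof (rule fmor_tensor_cong[where a = "\<lambda>t. fst (snd t)", OF F1 nm])
    show "(\<Sum>t\<leftarrow>ts. fst (snd t) u w * \<beta>1 t z) = (\<Sum>t\<leftarrow>ts'. fst (snd t) u w * \<beta>1 t z)" for u w z
      using step0[of "fst (fst z)" "snd (fst z)" "((u, w), snd z)"] by (simp add: \<beta>0_def \<beta>1_def ac_simps)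
  qed (use mem in auto)
  note step1 = this
  define \<beta>2 where "\<beta>2 t z = fmor G n m (fst t) (fst (fst z)) (snd (fst z))
    * fmor F1 n m (fst (snd t)) (fst (snd z)) (snd (snd z))"
    for t :: "'a wmat \<times> 'a wmat \<times> 'a wmat" and z :: "(nat \<times> nat) \<times> nat \<times> nat"
  have "(\<Sum>t\<leftarrow>ts. fmor F2 n m (snd (snd t)) i j * \<beta>2 t z) = (\<Sum>t\<leftarrow>ts'. fmor F2 n m (snd (snd t)) i j * \<beta>2 t z)"
    for i j z
  proof (rule fmor_tensor_cong[where a = "\<lambda>t. snd (snd t)", OF F2 nm])
    show "(\<Sum>t\<leftarrow>ts. snd (snd t) u w * \<beta>2 t z) = (\<Sum>t\<leftarrow>ts'. snd (snd t) u w * \<beta>2 t z)" for u w z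
      using step1[of "fst (snd z)" "snd (snd z)" "(fst z, (u, w))"] by (simp add: \<beta>1_def \<beta>2_def ac_simps)
  qed (use mem in auto)
  from this[of i2 j2 "((i, j), (i', j'))"] show ?thesis
    by (simp add: \<beta>2_def mult.commute)
qed

lemma fmor_kron3_unique:
  assumes G: "is_functor e (HomJ Q0 q0 e J0) G" and F1: "is_functor d1 (HomJ Q1 q1 d1 J1) F1"
    and F2: "is_functor d2 (HomJ Q2 q2 d2 J2) F2" and nm: "1 \<le> n" "1 \<le> m"
    and ts: "wkron3_decomp e d1 (HomJ Q0 q0 e J0 n m) (HomJ Q1 q1 d1 J1 n m) (HomJ Q2 q2 d2 J2 n m) phi ts"
    and ts': "wkron3_decomp e d1 (HomJ Q0 q0 e J0 n m) (HomJ Q1 q1 d1 J1 n m) (HomJ Q2 q2 d2 J2 n m) phi ts'"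
  shows "fmor_kron3 G F1 F2 n m ts = fmor_kron3 G F1 F2 n m ts'"
  unfolding fmor_kron3_def nkron_def
  by (intro ext fmor_tensor3_cong[OF G F1 F2 nm])
    (use ts ts' wkron3_decomp_entries[OF ts ts'] in \<open>auto simp: wkron3_decomp_def\<close>)

lemma HomA_wkron_decomp:
  "phi \<in> HomA q (d1 + d2) n m \<Longrightarrow> \<exists>qs. wkron_decomp d1 (HomA q d1 n m) (HomA q d2 n m) phi qs"
  using HomJ_interval_wkron_decomp[where s = 1 and Q = 1 and e = d1 and d = d2] unfolding HomA_def by blast

lemma fmor_prod_fun_tensorA:
  assumes G: "is_functor e (HomJ Q q e J) G" and F1: "is_functor d1 (HomA q d1) F1"
    and F2: "is_functor d2 (HomA q d2) F2" and nm: "1 \<le> n" "1 \<le> m"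
    and ps: "wkron_decomp e (HomJ Q q e J n m) (HomA q (d1 + d2) n m) phi ps"
  obtains ts where "wkron3_decomp e d1 (HomJ Q q e J n m) (HomA q d1 n m) (HomA q d2 n m) phi ts"
    and "fmor (prod_fun e (HomJ Q q e J) (HomA q (d1 + d2)) G (tensorA q d1 d2 F1 F2)) n m phi
         = fmor_kron3 G F1 F2 n m ts"
proof -
  let ?T = "tensorA q d1 d2 F1 F2"
  have T: "is_functor (d1 + d2) (HomA q (d1 + d2)) ?T"
    using prod_fun_interval_is_functor[where s = 1 and Q = 1, OF _ F1[unfolded HomA_def] F2]
    unfolding tensorA_def HomA_def by simp
  have "\<exists>qs. wkron_decomp d1 (HomA q d1 n m) (HomA q d2 n m) (snd p) qs" if "p \<in> set ps" for p
    using ps that HomA_wkron_decomp unfolding wkron_decomp_def by blast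
  then obtain dec where
    dec: "\<And>p. p \<in> set ps \<Longrightarrow> wkron_decomp d1 (HomA q d1 n m) (HomA q d2 n m) (snd p) (dec p)"
    by metis
  define ts where "ts = [(fst p, r). p \<leftarrow> ps, r \<leftarrow> dec p]"
  have "phi = (\<lambda>u w. \<Sum>p\<leftarrow>ps. wkron e (fst p) (\<lambda>u w. \<Sum>r\<leftarrow>dec p. wkron d1 (fst r) (snd r) u w) u w)"
    using ps dec unfolding wkron_decomp_def by (simp cong: map_cong)
  then have "wkron3_decomp e d1 (HomJ Q q e J n m) (HomA q d1 n m) (HomA q d2 n m) phi ts"
    using ps dec unfolding wkron3_decomp_def wkron_decomp_def ts_def
    by (auto simp: sum_list_concat_map wkron_sum_list_right o_def)
  moreover have "fmor (prod_fun e (HomJ Q q e J) (HomA q (d1 + d2)) G ?T) n m phi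
      = fmor_kron3 G F1 F2 n m ts"
  proof -
    have "fmor ?T n m (snd p) = fmor_kron F1 F2 n m (dec p)" if "p \<in> set ps" for p
      using fmor_prod_fun[OF F1[unfolded HomA_def] F2[unfolded HomA_def] nm] dec[OF that]
      unfolding tensorA_def HomA_def by blast
    then show ?thesis
      using fmor_prod_fun[OF G T[unfolded HomA_def] nm] ps unfolding HomA_def
      by (simp add: fmor_kron_def fmor_kron3_def ts_def tensorA_def sum_list_concat_map o_def
          nkron_sum_list_right nkron_assoc cong: map_cong)
  qed
  ultimately show ?thesis using that by blast
qed

lemma fmor_prod_fun_prod_fun:
  assumes s: "s \<le> 1" and G: "is_functor e (HomJ Q q e {s..<e}) G"
    and F1: "is_functor d1 (HomA q d1) F1" and F2: "is_functor d2 (HomA q d2) F2" and nm: "1 \<le> n" "1 \<le> m"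
    and ps: "wkron_decomp (e + d1) (HomJ Q q (e + d1) {s..<e + d1} n m) (HomA q d2 n m) phi ps"
  obtains ts where "wkron3_decomp e d1 (HomJ Q q e {s..<e} n m) (HomA q d1 n m) (HomA q d2 n m) phi ts"
    and "fmor (prod_fun (e + d1) (HomJ Q q (e + d1) {s..<e + d1}) (HomA q d2)
               (prod_fun e (HomJ Q q e {s..<e}) (HomA q d1) G F1) F2) n m phi
         = fmor_kron3 G F1 F2 n m ts"
proof -
  let ?GF = "prod_fun e (HomJ Q q e {s..<e}) (HomA q d1) G F1"
  have GF: "is_functor (e + d1) (HomJ Q q (e + d1) {s..<e + d1}) ?GF"
    by (rule prod_fun_interval_is_functor[OF s G F1])
  have "\<exists>qs. wkron_decomp e (HomJ Q q e {s..<e} n m) (HomA q d1 n m) (fst p) qs" if "p \<in> set ps" for p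
  proof -
    from ps that have "fst p \<in> HomJ Q q (e + d1) {s..<e + d1} n m"
      unfolding wkron_decomp_def by auto
    then obtain qs where "wkron_decomp e (HomJ Q q e {s..<e} n m) (HomA q d1 n m) (fst p) qs"
      by (rule HomJ_interval_wkron_decomp[OF s])
    then show ?thesis ..
  qed
  then obtain dec where
    dec: "\<And>p. p \<in> set ps \<Longrightarrow> wkron_decomp e (HomJ Q q e {s..<e} n m) (HomA q d1 n m) (fst p) (dec p)"
    by metis
  define ts where "ts = [(fst r, snd r, snd p). p \<leftarrow> ps, r \<leftarrow> dec p]"
  have "wkron (e + d1) (fst p) (snd p)
      = (\<lambda>u w. \<Sum>r\<leftarrow>dec p. wkron e (fst r) (wkron d1 (snd r) (snd p)) u w)" if "p \<in> set ps" for p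
    using dec[OF that] unfolding wkron_decomp_def by (simp add: wkron_sum_list_left wkron_assoc)
  with ps have "phi = (\<lambda>u w. \<Sum>p\<leftarrow>ps. \<Sum>r\<leftarrow>dec p. wkron e (fst r) (wkron d1 (snd r) (snd p)) u w)"
    unfolding wkron_decomp_def by (simp cong: map_cong)
  with ps dec have "wkron3_decomp e d1 (HomJ Q q e {s..<e} n m) (HomA q d1 n m) (HomA q d2 n m) phi ts"
    unfolding wkron3_decomp_def wkron_decomp_def ts_def by (auto simp: sum_list_concat_map o_def)
  moreover have "fmor (prod_fun (e + d1) (HomJ Q q (e + d1) {s..<e + d1}) (HomA q d2) ?GF F2) n m phi
      = fmor_kron3 G F1 F2 n m ts"
  proof -
    have "fmor ?GF n m (fst p) = fmor_kron G F1 n m (dec p)" if "p \<in> set ps" for p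
      using fmor_prod_fun[OF G F1[unfolded HomA_def] nm] dec[OF that] unfolding HomA_def by blast
    then show ?thesis
      using fmor_prod_fun[OF GF F2[unfolded HomA_def] nm] ps unfolding HomA_def
      by (simp add: fmor_kron_def fmor_kron3_def ts_def sum_list_concat_map o_def
          nkron_sum_list_left cong: map_cong)
  qed
  ultimately show ?thesis using that by blast
qed

lemma prod_fun_assoc:
  assumes s: "s \<le> 1" and G: "is_functor e (HomJ Q q e {s..<e}) G"
    and F1: "is_functor d1 (HomA q d1) F1" and F2: "is_functor d2 (HomA q d2) F2"
  shows "feq (HomJ Q q (e + d1 + d2) {s..<e + d1 + d2})
     (prod_fun e (HomJ Q q e {s..<e}) (HomA q (d1 + d2)) G (tensorA q d1 d2 F1 F2))
     (prod_fun (e + d1) (HomJ Q q (e + d1) {s..<e + d1}) (HomA q d2)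
        (prod_fun e (HomJ Q q e {s..<e}) (HomA q d1) G F1) F2)"
  unfolding feq_def
proof (intro conjI allI impI)
  fix n m phi assume nm: "1 \<le> n" "1 \<le> m" and phi: "phi \<in> HomJ Q q (e + d1 + d2) {s..<e + d1 + d2} n m"
  obtain ps where "wkron_decomp e (HomJ Q q e {s..<e} n m) (HomA q (d1 + d2) n m) phi ps"
    using HomJ_interval_wkron_decomp[OF s] phi by (metis add.assoc)
  then obtain ts where
    ts: "wkron3_decomp e d1 (HomJ Q q e {s..<e} n m) (HomA q d1 n m) (HomA q d2 n m) phi ts"
    and lhs: "fmor (prod_fun e (HomJ Q q e {s..<e}) (HomA q (d1 + d2)) G (tensorA q d1 d2 F1 F2)) n m phi
              = fmor_kron3 G F1 F2 n m ts"
    using fmor_prod_fun_tensorA[OF G F1 F2 nm] by blast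
  obtain ps' where "wkron_decomp (e + d1) (HomJ Q q (e + d1) {s..<e + d1} n m) (HomA q d2 n m) phi ps'"
    using HomJ_interval_wkron_decomp[OF s phi] .
  then obtain ts' where
    ts': "wkron3_decomp e d1 (HomJ Q q e {s..<e} n m) (HomA q d1 n m) (HomA q d2 n m) phi ts'"
    and rhs: "fmor (prod_fun (e + d1) (HomJ Q q (e + d1) {s..<e + d1}) (HomA q d2)
                (prod_fun e (HomJ Q q e {s..<e}) (HomA q d1) G F1) F2) n m phi
              = fmor_kron3 G F1 F2 n m ts'"
    using fmor_prod_fun_prod_fun[OF s G F1 F2 nm] by blast
  show "fmor (prod_fun e (HomJ Q q e {s..<e}) (HomA q (d1 + d2)) G (tensorA q d1 d2 F1 F2)) n m phi
      = fmor (prod_fun (e + d1) (HomJ Q q (e + d1) {s..<e + d1}) (HomA q d2)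
                (prod_fun e (HomJ Q q e {s..<e}) (HomA q d1) G F1) F2) n m phi"
  proof -
    have "fmor_kron3 G F1 F2 n m ts = fmor_kron3 G F1 F2 n m ts'"
      using fmor_kron3_unique[OF G F1[unfolded HomA_def] F2[unfolded HomA_def] nm] ts ts'
      unfolding HomA_def by blast
    then show ?thesis unfolding lhs rhs .
  qed
qed (simp add: tensorA_def mult.assoc)

lemma fdim_starBA [simp]: "fdim (starBA Q q e d G F) n = fdim G n * fdim F n"
  unfolding starBA_def by simp

lemma fdim_tensorA [simp]: "fdim (tensorA q d1 d2 F1 F2) n = fdim F1 n * fdim F2 n"
  unfolding tensorA_def by simp

lemma nt_kron_apply: "nt_kron F' F eta theta n = nkron (fdim F' n) (fdim F n) (eta n) (theta n)"
  unfolding nt_kron_def ..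

lemma starBA_is_functor: "Pobj Q q e G \<Longrightarrow> APobj q d F \<Longrightarrow> Pobj Q q (e + d) (starBA Q q e d G F)"
  unfolding Pobj_def APobj_def starBA_def HomB_def by (simp add: prod_fun_interval_is_functor)

lemma starBA_nat_trans:
  assumes "Pobj Q q e G" "Pobj Q q e G'" "APobj q d F" "APobj q d F'"
    and "nat_trans (HomB Q q e) G G' eta" "nat_trans (HomA q d) F F' theta"
  shows "nat_trans (HomB Q q (e + d)) (starBA Q q e d G F) (starBA Q q e d G' F') (nt_kron F' F eta theta)"
proof -
  have "\<exists>ps. wkron_decomp e (HomJ Q q e {0..<e} n m) (HomJ 1 q d {1..<d} n m) phi ps"
    if "phi \<in> HomJ Q q (e + d) {0..<e + d} n m" for n m phi
    using HomJ_interval_wkron_decomp[where s = 0, OF _ that] unfolding HomA_def by blast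
  with assms show ?thesis
    unfolding Pobj_def APobj_def starBA_def HomB_def HomA_def by (intro prod_fun_nat_trans) auto
qed

lemma unitA_APobj: "APobj q 0 unitA"
  unfolding APobj_def by (rule unitA_is_functor)

lemma starBA_assoc:
  "Pobj Q q e G \<Longrightarrow> APobj q d1 F1 \<Longrightarrow> APobj q d2 F2
   \<Longrightarrow> feq (HomB Q q (e + d1 + d2)) (starBA Q q e (d1 + d2) G (tensorA q d1 d2 F1 F2))
         (starBA Q q (e + d1) d2 (starBA Q q e d1 G F1) F2)"
  unfolding Pobj_def APobj_def starBA_def HomB_def by (simp add: prod_fun_assoc)

lemma tensorA_assoc:
  "APobj q d1 F1 \<Longrightarrow> APobj q d2 F2 \<Longrightarrow> APobj q d3 F3
   \<Longrightarrow> feq (HomA q (d1 + d2 + d3)) (tensorA q d1 (d2 + d3) F1 (tensorA q d2 d3 F2 F3))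
         (tensorA q (d1 + d2) d3 (tensorA q d1 d2 F1 F2) F3)"
  using prod_fun_assoc[where s = 1 and Q = 1 and G = F1]
  unfolding APobj_def tensorA_def HomA_def by simp

lemma tensorA_unit_left: "APobj q d F \<Longrightarrow> feq (HomA q d) (tensorA q 0 d unitA F) F"
  unfolding APobj_def tensorA_def HomA_def by (rule prod_fun_unit_left[unfolded HomA_def])

lemma starBA_unit_right: "Pobj Q q e G \<Longrightarrow> feq (HomB Q q e) (starBA Q q e 0 G unitA) G"
  unfolding Pobj_def starBA_def HomB_def by (rule prod_fun_unit_right)

theorem theorem4p2:
  fixes Q q :: "'k::field"
  assumes "Q \<noteq> 0" and "q \<noteq> 0"
  shows
    \<comment> \<open>the unit object of AP_q\<close>
    "APobj q 0 (unitA :: 'k fctr)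
     \<comment> \<open>* on objects: G * F is an object of P^{e+d}\<close>
     \<and> (\<forall>e d G F. Pobj Q q e G \<longrightarrow> APobj q d F \<longrightarrow> Pobj Q q (e + d) (starBA Q q e d G F))
     \<comment> \<open>* on morphisms: f * g is a natural transformation\<close>
     \<and> (\<forall>e d G G' F F' eta theta.
          Pobj Q q e G \<longrightarrow> Pobj Q q e G' \<longrightarrow> APobj q d F \<longrightarrow> APobj q d F' \<longrightarrow>
          nat_trans (HomB Q q e) G G' eta \<longrightarrow> nat_trans (HomA q d) F F' theta \<longrightarrow>
          nat_trans (HomB Q q (e + d)) (starBA Q q e d G F) (starBA Q q e d G' F')
            (nt_kron F' F eta theta))
     \<comment> \<open>* preserves identities\<close>
     \<and> (\<forall>e d G F n. Pobj Q q e G \<longrightarrow> APobj q d F \<longrightarrow> 1 \<le> n \<longrightarrow>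
          nt_kron F F (ntid G) (ntid F) n = ntid (starBA Q q e d G F) n)
     \<comment> \<open>condition (1): (f1 * g1)(f2 * g2) = (f1 f2) * (g1 g2)\<close>
     \<and> (\<forall>e d G1 G2 G3 F1 F2 F3 eta1 eta2 theta1 theta2 n.
          Pobj Q q e G1 \<longrightarrow> Pobj Q q e G2 \<longrightarrow> Pobj Q q e G3 \<longrightarrow>
          APobj q d F1 \<longrightarrow> APobj q d F2 \<longrightarrow> APobj q d F3 \<longrightarrow>
          nat_trans (HomB Q q e) G2 G3 eta1 \<longrightarrow> nat_trans (HomB Q q e) G1 G2 eta2 \<longrightarrow>
          nat_trans (HomA q d) F2 F3 theta1 \<longrightarrow> nat_trans (HomA q d) F1 F2 theta2 \<longrightarrow> 1 \<le> n \<longrightarrow>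
          ntcomp (starBA Q q e d G2 F2) (nt_kron F3 F2 eta1 theta1) (nt_kron F2 F1 eta2 theta2) n
          = nt_kron F3 F1 (ntcomp G2 eta1 eta2) (ntcomp F2 theta1 theta2) n)
     \<comment> \<open>condition (2) with lambda = identity: Y * (X1 \<otimes> X2) = (Y * X1) * X2 ...\<close>
     \<and> (\<forall>e d1 d2 G F1 F2. Pobj Q q e G \<longrightarrow> APobj q d1 F1 \<longrightarrow> APobj q d2 F2 \<longrightarrow>
          feq (HomB Q q (e + d1 + d2)) (starBA Q q e (d1 + d2) G (tensorA q d1 d2 F1 F2))
              (starBA Q q (e + d1) d2 (starBA Q q e d1 G F1) F2))
     \<comment> \<open>... naturally in Y, X1, X2\<close>
     \<and> (\<forall>e d1 d2 G G' F1 F1' F2 F2' eta theta1 theta2 n.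
          Pobj Q q e G \<longrightarrow> Pobj Q q e G' \<longrightarrow> APobj q d1 F1 \<longrightarrow> APobj q d1 F1' \<longrightarrow>
          APobj q d2 F2 \<longrightarrow> APobj q d2 F2' \<longrightarrow>
          nat_trans (HomB Q q e) G G' eta \<longrightarrow> nat_trans (HomA q d1) F1 F1' theta1 \<longrightarrow>
          nat_trans (HomA q d2) F2 F2' theta2 \<longrightarrow> 1 \<le> n \<longrightarrow>
          nt_kron (tensorA q d1 d2 F1' F2') (tensorA q d1 d2 F1 F2) eta (nt_kron F2' F2 theta1 theta2) n
          = nt_kron F2' F2 (nt_kron F1' F1 eta theta1) theta2 n)
     \<comment> \<open>the associator a and left unitor l of AP_q are identities, so the coherence
         conditions in (2) and (3) hold with identity structure morphisms\<close>
     \<and> (\<forall>d1 d2 d3 F1 F2 F3. APobj q d1 F1 \<longrightarrow> APobj q d2 F2 \<longrightarrow> APobj q d3 F3 \<longrightarrow>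
          feq (HomA q (d1 + d2 + d3)) (tensorA q d1 (d2 + d3) F1 (tensorA q d2 d3 F2 F3))
              (tensorA q (d1 + d2) d3 (tensorA q d1 d2 F1 F2) F3))
     \<and> (\<forall>d F. APobj q d F \<longrightarrow> feq (HomA q d) (tensorA q 0 d unitA F) F)
     \<comment> \<open>condition (3) with rho = identity: Y * 1 = Y, naturally in Y\<close>
     \<and> (\<forall>e G. Pobj Q q e G \<longrightarrow> feq (HomB Q q e) (starBA Q q e 0 G unitA) G)
     \<and> (\<forall>e G G' eta n. Pobj Q q e G \<longrightarrow> Pobj Q q e G' \<longrightarrow> nat_trans (HomB Q q e) G G' eta \<longrightarrow>
          1 \<le> n \<longrightarrow> nt_kron unitA unitA eta (ntid unitA) n = eta n)"
  by (intro conjI allI impI)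
    (simp_all add: unitA_APobj starBA_is_functor starBA_nat_trans starBA_assoc tensorA_assoc
      tensorA_unit_left starBA_unit_right nt_kron_apply ntid_def ntcomp_def nkron_nid nkron_mixed
      nkron_assoc nkron_nid1_right[simplified])

end
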